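(* For every $n\ge1$, the set of two-sided ideals of the algebra $\mathbb{S}_n$ satisfies the ascending chain condition: every ascending chain $I_1\subseteq I_2\subseteq\cdots$ of two-sided ideals of $\mathbb{S}_n$ stabilizes.
   Context: $K$ is a field. $\mathbb{S}_n$ is the $K$-algebra generated by $x_1,\dots,x_n,y_1,\dots,y_n$ subject to the defining relations $y_ix_i=1$ for all $i$, and $[x_i,y_j]=[x_i,x_j]=[y_i,y_j]=0$ for all $i\ne j$, where $[a,b]=ab-ba$. (This algebra is neither left nor right Noetherian.) *)

theory Defs
  imports "HOL-Algebra.QuotRing"
begin

datatype gen = X nat | Y nat

definition gens :: "nat \<Rightarrow> gen set" where
  "gens n = {X i | i. 1 \<le> i \<and> i \<le> n} \<union> {Y i | i. 1 \<le> i \<and> i \<le> n}"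

text \<open>The free associative K-algebra on x_1..x_n, y_1..y_n: finitely supported
  K-valued functions on words (lists) over the generators, with pointwise addition
  and the concatenation (convolution) product.\<close>
definition free_alg :: "nat \<Rightarrow> (gen list \<Rightarrow> 'k::field) ring" where
  "free_alg n = \<lparr> carrier = {f. finite {w. f w \<noteq> 0} \<and> (\<forall>w. f w \<noteq> 0 \<longrightarrow> set w \<subseteq> gens n)},
     monoid.mult = (\<lambda>f g w. \<Sum>i\<le>length w. f (take i w) * g (drop i w)),
     one = (\<lambda>w. if w = [] then 1 else 0),
     zero = (\<lambda>w. 0),
     add = (\<lambda>f g w. f w + g w) \<rparr>"

definition mon :: "gen list \<Rightarrow> gen list \<Rightarrow> 'k::field" where
  "mon u = (\<lambda>w. if w = u then 1 else 0)"

definition rels :: "nat \<Rightarrow> (gen list \<Rightarrow> 'k::field) set" where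
  "rels n =
     {(\<lambda>w. mon [Y i, X i] w - mon [] w) | i. 1 \<le> i \<and> i \<le> n}
   \<union> {(\<lambda>w. mon [X i, Y j] w - mon [Y j, X i] w) | i j. 1 \<le> i \<and> i \<le> n \<and> 1 \<le> j \<and> j \<le> n \<and> i \<noteq> j}
   \<union> {(\<lambda>w. mon [X i, X j] w - mon [X j, X i] w) | i j. 1 \<le> i \<and> i \<le> n \<and> 1 \<le> j \<and> j \<le> n \<and> i \<noteq> j}
   \<union> {(\<lambda>w. mon [Y i, Y j] w - mon [Y j, Y i] w) | i j. 1 \<le> i \<and> i \<le> n \<and> 1 \<le> j \<and> j \<le> n \<and> i \<noteq> j}"

definition S_alg :: "nat \<Rightarrow> (gen list \<Rightarrow> 'k::field) set ring" where
  "S_alg n = free_alg n Quot genideal (free_alg n) (rels n)"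

end

theory Submission
  imports Defs "HOL-Algebra.Generated_Rings"
begin

text \<open>
  \<open>S\<^sub>n\<close> is generated over \<open>K\<close> by \<open>n\<close> mutually commuting pairs \<open>x\<^sub>i, y\<^sub>i\<close> with \<open>y\<^sub>i x\<^sub>i = 1\<close>.
  We induct on the number of pairs, proving the ascending chain condition for the ideals
  above an arbitrary ideal \<open>Z\<close>. Adjoin a pair \<open>x, y\<close> commuting with \<open>A\<close> and put \<open>p = 1 - x y\<close>:
  the elements \<open>x\<^sup>i p y\<^sup>j\<close> behave like matrix units with entries in \<open>A\<close>, and \<open>F = Z + (p)\<close> is
  the ideal of finite matrices modulo \<open>Z\<close>. A chain above \<open>Z\<close> stabilises once its sums with \<open>F\<close>
  and its intersections with \<open>F\<close> do (modular law). An ideal between \<open>Z\<close> and \<open>F\<close> is determined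
  by its entries \<open>p b\<close>, \<open>b \<in> A\<close>, so the intersections are controlled by ideals of \<open>A\<close>; modulo
  \<open>F\<close> the elements \<open>x\<close> and \<open>y\<close> commute, so the sums are controlled by the Hilbert basis
  theorem, applied twice over \<open>A\<close>.
\<close>

no_notation Sum_Type.Plus (infixr \<open><+>\<close> 65)

section \<open>Ideals of subrings and the ascending chain condition\<close>

text \<open>Two-sided ideals of a subring \<open>B\<close> of \<open>R\<close>, stated with the operations of \<open>R\<close> so that
  subrings never have to be turned into ring structures of their own.\<close>
definition ideal_in :: "('a, 'b) ring_scheme \<Rightarrow> 'a set \<Rightarrow> 'a set \<Rightarrow> bool" where
  "ideal_in R B I \<longleftrightarrow> I \<subseteq> B \<and> \<zero>\<^bsub>R\<^esub> \<in> I \<and> (\<forall>a\<in>I. \<forall>b\<in>I. a \<oplus>\<^bsub>R\<^esub> b \<in> I) \<and> (\<forall>a\<in>I. \<ominus>\<^bsub>R\<^esub> a \<in> I)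
     \<and> (\<forall>a\<in>I. \<forall>b\<in>B. a \<otimes>\<^bsub>R\<^esub> b \<in> I \<and> b \<otimes>\<^bsub>R\<^esub> a \<in> I)"

definition acc_ideals_above :: "('a, 'b) ring_scheme \<Rightarrow> 'a set \<Rightarrow> 'a set \<Rightarrow> bool" where
  "acc_ideals_above R B Z \<longleftrightarrow>
     (\<forall>I :: nat \<Rightarrow> 'a set. (\<forall>m. ideal_in R B (I m) \<and> Z \<subseteq> I m \<and> I m \<subseteq> I (Suc m))
        \<longrightarrow> (\<exists>N. \<forall>m\<ge>N. I m = I N))"

lemma acc_ideals_aboveD:
  assumes "acc_ideals_above R B Z"
    and "\<And>m. ideal_in R B (I m)" "\<And>m. Z \<subseteq> I m" "\<And>m. I m \<subseteq> I (Suc m)"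
  shows "\<exists>N. \<forall>m\<ge>N. I m = I N"
  using assms unfolding acc_ideals_above_def by blast

lemma acc_ideals_aboveI:
  assumes "\<And>I. (\<And>m. ideal_in R B (I m)) \<Longrightarrow> (\<And>m. Z \<subseteq> I m) \<Longrightarrow> (\<And>m. I m \<subseteq> I (Suc m))
    \<Longrightarrow> \<exists>N. \<forall>m\<ge>N. I m = I N"
  shows "acc_ideals_above R B Z"
  using assms unfolding acc_ideals_above_def by blast

lemma ideal_in_subset: "ideal_in R B I \<Longrightarrow> I \<subseteq> B"
  and ideal_in_zero: "ideal_in R B I \<Longrightarrow> \<zero>\<^bsub>R\<^esub> \<in> I"
  and ideal_in_add: "ideal_in R B I \<Longrightarrow> a \<in> I \<Longrightarrow> b \<in> I \<Longrightarrow> a \<oplus>\<^bsub>R\<^esub> b \<in> I"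
  and ideal_in_neg: "ideal_in R B I \<Longrightarrow> a \<in> I \<Longrightarrow> \<ominus>\<^bsub>R\<^esub> a \<in> I"
  and ideal_in_lmult: "ideal_in R B I \<Longrightarrow> a \<in> I \<Longrightarrow> b \<in> B \<Longrightarrow> b \<otimes>\<^bsub>R\<^esub> a \<in> I"
  and ideal_in_rmult: "ideal_in R B I \<Longrightarrow> a \<in> I \<Longrightarrow> b \<in> B \<Longrightarrow> a \<otimes>\<^bsub>R\<^esub> b \<in> I"
  by (auto simp: ideal_in_def)

lemma ideal_in_minus: "ideal_in R B I \<Longrightarrow> a \<in> I \<Longrightarrow> b \<in> I \<Longrightarrow> a \<ominus>\<^bsub>R\<^esub> b \<in> I"
  by (simp add: a_minus_def ideal_in_add ideal_in_neg)

lemma ideal_in_Int: "ideal_in R B I \<Longrightarrow> ideal_in R B J \<Longrightarrow> ideal_in R B (I \<inter> J)"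
  by (auto simp: ideal_in_def)

lemma ideal_in_restrict:
  "ideal_in R B I \<Longrightarrow> subring A R \<Longrightarrow> A \<subseteq> B \<Longrightarrow> ideal_in R A (I \<inter> A)"
  unfolding ideal_in_def by (auto simp: subringE)

lemma ideal_imp_ideal_in:
  assumes "ideal I R" shows "ideal_in R (carrier R) I"
proof -
  interpret ideal I R by (rule assms)
  show ?thesis unfolding ideal_in_def using a_subset I_l_closed I_r_closed by auto
qed

lemma (in ring) zero_ideal_in: "subring B R \<Longrightarrow> ideal_in R B {\<zero>}"
  unfolding ideal_in_def using subringE(1,2) by fastforce

lemma set_add_iff: "u \<in> I <+>\<^bsub>R\<^esub> J \<longleftrightarrow> (\<exists>a\<in>I. \<exists>b\<in>J. u = a \<oplus>\<^bsub>R\<^esub> b)"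
  by (auto simp: set_add_def')

context ring
begin

lemma subring_minus: "subring S R \<Longrightarrow> a \<in> S \<Longrightarrow> b \<in> S \<Longrightarrow> a \<ominus> b \<in> S"
  by (simp add: a_minus_def subringE(5,7))

lemma subring_pow: "subring S R \<Longrightarrow> a \<in> S \<Longrightarrow> a [^] (n::nat) \<in> S"
  by (induction n) (auto simp: subringE(3,6))

lemma ideal_in_set_add:
  assumes B: "subring B R" and I: "ideal_in R B I" and J: "ideal_in R B J"
  shows "ideal_in R B (I <+> J)"
proof -
  have cB: "a \<in> B \<Longrightarrow> a \<in> carrier R" for a using subringE(1)[OF B] by blast
  have cI: "a \<in> I \<Longrightarrow> a \<in> carrier R" and cJ: "a \<in> J \<Longrightarrow> a \<in> carrier R" for a
    using ideal_in_subset[OF I] ideal_in_subset[OF J] cB by blast+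
  show ?thesis
    unfolding ideal_in_def
  proof (intro conjI ballI)
    show "I <+> J \<subseteq> B"
      using ideal_in_subset[OF I] ideal_in_subset[OF J] subringE(7)[OF B] by (force simp: set_add_iff)
    show "\<zero> \<in> I <+> J"
      using ideal_in_zero[OF I] ideal_in_zero[OF J] by (force simp: set_add_iff)
  next
    fix u v assume "u \<in> I <+> J" "v \<in> I <+> J"
    then obtain a b a' b' where "u = a \<oplus> b" "v = a' \<oplus> b'" "a \<in> I" "b \<in> J" "a' \<in> I" "b' \<in> J"
      by (auto simp: set_add_iff)
    moreover have "(a \<oplus> b) \<oplus> (a' \<oplus> b') = (a \<oplus> a') \<oplus> (b \<oplus> b')"
      using calculation cI cJ by algebra
    ultimately show "u \<oplus> v \<in> I <+> J"
      using ideal_in_add[OF I] ideal_in_add[OF J] unfolding set_add_iff by blast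
  next
    fix u assume "u \<in> I <+> J"
    then obtain a b where "u = a \<oplus> b" "a \<in> I" "b \<in> J" by (auto simp: set_add_iff)
    then show "\<ominus> u \<in> I <+> J"
      using ideal_in_neg[OF I] ideal_in_neg[OF J] cI cJ by (auto simp: set_add_iff minus_add)
  next
    fix u c assume "u \<in> I <+> J" "c \<in> B"
    then obtain a b where "u = a \<oplus> b" "a \<in> I" "b \<in> J" by (auto simp: set_add_iff)
    then show "u \<otimes> c \<in> I <+> J" "c \<otimes> u \<in> I <+> J"
      using I J \<open>c \<in> B\<close> cI cJ cB
      by (auto simp: set_add_iff l_distr r_distr intro: ideal_in_lmult ideal_in_rmult)
  qed
qed

lemma set_add_mono_left: "I \<subseteq> I' \<Longrightarrow> I <+> J \<subseteq> I' <+> J"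
  unfolding set_add_def' by blast

lemma subset_set_add_left:
  assumes "ideal_in R B J" and "I \<subseteq> carrier R" shows "I \<subseteq> I <+> J"
proof
  fix a assume "a \<in> I"
  then have "a = a \<oplus> \<zero>" using assms(2) by auto
  then show "a \<in> I <+> J" using \<open>a \<in> I\<close> ideal_in_zero[OF assms(1)] unfolding set_add_iff by blast
qed

lemma subset_set_add_right:
  assumes "ideal_in R B I" and "J \<subseteq> carrier R" shows "J \<subseteq> I <+> J"
proof
  fix b assume "b \<in> J"
  then have "b = \<zero> \<oplus> b" using assms(2) by auto
  then show "b \<in> I <+> J" using \<open>b \<in> J\<close> ideal_in_zero[OF assms(1)] unfolding set_add_iff by blast
qed

lemma ideal_in_subset_by_modular_law:
  assumes B: "subring B R" and I: "ideal_in R B I" and I': "ideal_in R B I'" and F: "ideal_in R B F"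
    and "I \<subseteq> I'" and "I' \<inter> F \<subseteq> I" and "I' <+> F \<subseteq> I <+> F"
  shows "I' \<subseteq> I"
proof
  fix g assume g: "g \<in> I'"
  have "I' \<subseteq> carrier R" using ideal_in_subset[OF I'] subringE(1)[OF B] by blast
  then have "g \<in> I <+> F" using g subset_set_add_left[OF F] assms(7) by blast
  then obtain a f where gf: "g = a \<oplus> f" "a \<in> I" "f \<in> F" by (auto simp: set_add_iff)
  have "a \<in> carrier R" "f \<in> carrier R"
    using gf ideal_in_subset[OF I] ideal_in_subset[OF F] subringE(1)[OF B] by blast+
  then have "f = g \<ominus> a" using gf by algebra
  then have "f \<in> I" using g gf assms(5,6) ideal_in_minus[OF I'] by blast
  then show "g \<in> I" using gf ideal_in_add[OF I] by blast
qed

end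

context ring
begin

lemma generate_ring_commutes_mod:
  assumes Z: "ideal_in R B Z" and B: "subring B R" and G: "G \<subseteq> B" and y: "y \<in> B"
    and comm: "\<And>g. g \<in> G \<Longrightarrow> y \<otimes> g \<ominus> g \<otimes> y \<in> Z"
    and b: "b \<in> generate_ring R G"
  shows "y \<otimes> b \<ominus> b \<otimes> y \<in> Z"
proof -
  have GB: "generate_ring R G \<subseteq> B"
    using B G subringE(1) by (intro generate_ring_min_subring1) auto
  have c: "a \<in> carrier R" if "a \<in> generate_ring R G" for a using that GB subringE(1)[OF B] by blast
  have yc: "y \<in> carrier R" using y subringE(1)[OF B] by blast
  from b show ?thesis
  proof (induction rule: generate_ring.induct)
    case one
    have "y \<otimes> \<one> \<ominus> \<one> \<otimes> y = \<zero>" using yc by (simp add: a_minus_def r_neg)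
    then show ?case using ideal_in_zero[OF Z] by simp
  next
    case (incl h) then show ?case by (rule comm)
  next
    case (a_inv h)
    have "y \<otimes> (\<ominus> h) \<ominus> (\<ominus> h) \<otimes> y = \<ominus> (y \<otimes> h \<ominus> h \<otimes> y)" using c[OF a_inv.hyps] yc by algebra
    then show ?case using ideal_in_neg[OF Z a_inv.IH] by simp
  next
    case (eng_add h1 h2)
    have "y \<otimes> (h1 \<oplus> h2) \<ominus> (h1 \<oplus> h2) \<otimes> y = (y \<otimes> h1 \<ominus> h1 \<otimes> y) \<oplus> (y \<otimes> h2 \<ominus> h2 \<otimes> y)"
      using c[OF eng_add.hyps(1)] c[OF eng_add.hyps(2)] yc by algebra
    then show ?case using ideal_in_add[OF Z eng_add.IH] by simp
  next
    case (eng_mult h1 h2)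
    have "y \<otimes> (h1 \<otimes> h2) \<ominus> (h1 \<otimes> h2) \<otimes> y = (y \<otimes> h1 \<ominus> h1 \<otimes> y) \<otimes> h2 \<oplus> h1 \<otimes> (y \<otimes> h2 \<ominus> h2 \<otimes> y)"
      using c[OF eng_mult.hyps(1)] c[OF eng_mult.hyps(2)] yc by algebra
    moreover have "h1 \<in> B" "h2 \<in> B" using eng_mult.hyps GB by blast+
    ultimately show ?case
      using eng_mult.IH by (metis ideal_in_add[OF Z] ideal_in_lmult[OF Z] ideal_in_rmult[OF Z])
  qed
qed

lemma generate_ring_commutes:
  assumes "G \<subseteq> carrier R" and "y \<in> carrier R" and "\<And>g. g \<in> G \<Longrightarrow> y \<otimes> g = g \<otimes> y"
    and "b \<in> generate_ring R G"
  shows "y \<otimes> b = b \<otimes> y"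
proof -
  have "y \<otimes> b \<ominus> b \<otimes> y \<in> {\<zero>}"
  proof (rule generate_ring_commutes_mod[OF zero_ideal_in[OF carrier_is_subring] carrier_is_subring])
    fix g assume "g \<in> G"
    then show "y \<otimes> g \<ominus> g \<otimes> y \<in> {\<zero>}" using assms(1-3) by (auto simp: a_minus_def r_neg)
  qed (use assms in auto)
  moreover have "b \<in> carrier R" using assms(1,4) generate_ring_in_carrier by blast
  then have "y \<otimes> b = (y \<otimes> b \<ominus> b \<otimes> y) \<oplus> b \<otimes> y" using assms(2) by algebra
  ultimately show ?thesis using \<open>b \<in> carrier R\<close> assms(2) by simp
qed

lemma acc_ideals_above_division_subring:
  assumes C: "subring C R" and inv: "\<And>c. c \<in> C \<Longrightarrow> c \<noteq> \<zero> \<Longrightarrow> \<exists>d\<in>C. d \<otimes> c = \<one>"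
  shows "acc_ideals_above R C Z"
proof (rule acc_ideals_aboveI)
  fix I :: "nat \<Rightarrow> 'a set"
  assume I: "\<And>m. ideal_in R C (I m)" and "\<And>m. Z \<subseteq> I m" and chain: "\<And>m. I m \<subseteq> I (Suc m)"
  show "\<exists>N. \<forall>m\<ge>N. I m = I N"
  proof (cases "\<exists>m c. c \<in> I m \<and> c \<noteq> \<zero>")
    case False
    then have "I m = {\<zero>}" for m using ideal_in_zero[OF I] by blast
    then show ?thesis by auto
  next
    case True
    then obtain m0 c where c: "c \<in> I m0" "c \<noteq> \<zero>" by blast
    then obtain d where d: "d \<in> C" "d \<otimes> c = \<one>" using inv ideal_in_subset[OF I] by blast
    have "I m = C" if "m \<ge> m0" for m
    proof
      have "\<one> \<in> I m"
        using ideal_in_lmult[OF I c(1) d(1)] d(2) lift_Suc_mono_le[of I, OF chain that] by auto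
      then show "C \<subseteq> I m" using ideal_in_rmult[OF I] subringE(1)[OF C] by force
    qed (rule ideal_in_subset[OF I])
    then show ?thesis by (intro exI[of _ m0]) auto
  qed
qed

end

locale ideal_in_subring = ring +
  fixes B :: "'a set" and Z :: "'a set"
  assumes subring_B: "subring B R" and ideal_Z: "ideal_in R B Z"
begin

definition eq_mod :: "'a \<Rightarrow> 'a \<Rightarrow> bool" where
  "eq_mod a b \<longleftrightarrow> a \<in> B \<and> b \<in> B \<and> a \<ominus> b \<in> Z"

lemma B_carrier: "a \<in> B \<Longrightarrow> a \<in> carrier R"
  using subringE(1)[OF subring_B] by blast

lemma Z_sub_B: "Z \<subseteq> B"
  by (rule ideal_in_subset[OF ideal_Z])

lemma eq_modD: "eq_mod a b \<Longrightarrow> a \<in> B" "eq_mod a b \<Longrightarrow> b \<in> B" "eq_mod a b \<Longrightarrow> a \<ominus> b \<in> Z"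
  by (auto simp: eq_mod_def)

lemma eq_mod_refl: "a \<in> B \<Longrightarrow> eq_mod a a"
  using B_carrier ideal_in_zero[OF ideal_Z] by (simp add: eq_mod_def a_minus_def r_neg)

lemma eq_mod_sym: "eq_mod a b \<Longrightarrow> eq_mod b a"
proof -
  assume ab: "eq_mod a b"
  then have "b \<ominus> a = \<ominus> (a \<ominus> b)" using B_carrier[OF eq_modD(1)] B_carrier[OF eq_modD(2)] by algebra
  then show ?thesis using ab ideal_in_neg[OF ideal_Z] by (simp add: eq_mod_def)
qed

lemma eq_mod_trans: "eq_mod a b \<Longrightarrow> eq_mod b c \<Longrightarrow> eq_mod a c"
proof -
  assume ab: "eq_mod a b" and bc: "eq_mod b c"
  then have "a \<ominus> c = (a \<ominus> b) \<oplus> (b \<ominus> c)" using B_carrier eq_modD by algebra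
  then show ?thesis using ab bc ideal_in_add[OF ideal_Z] by (simp add: eq_mod_def)
qed

lemma eq_mod_add: "eq_mod a b \<Longrightarrow> eq_mod c d \<Longrightarrow> eq_mod (a \<oplus> c) (b \<oplus> d)"
proof -
  assume ab: "eq_mod a b" and cd: "eq_mod c d"
  then have "(a \<oplus> c) \<ominus> (b \<oplus> d) = (a \<ominus> b) \<oplus> (c \<ominus> d)" using B_carrier eq_modD by algebra
  then show ?thesis
    using ab cd ideal_in_add[OF ideal_Z] subringE(7)[OF subring_B] by (simp add: eq_mod_def)
qed

lemma eq_mod_neg: "eq_mod a b \<Longrightarrow> eq_mod (\<ominus> a) (\<ominus> b)"
proof -
  assume ab: "eq_mod a b"
  then have "(\<ominus> a) \<ominus> (\<ominus> b) = \<ominus> (a \<ominus> b)" using B_carrier eq_modD by algebra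
  then show ?thesis
    using ab ideal_in_neg[OF ideal_Z] subringE(5)[OF subring_B] by (simp add: eq_mod_def)
qed

lemma eq_mod_minus: "eq_mod a b \<Longrightarrow> eq_mod c d \<Longrightarrow> eq_mod (a \<ominus> c) (b \<ominus> d)"
  unfolding a_minus_def by (intro eq_mod_add eq_mod_neg)

lemma eq_mod_lmult: "eq_mod a b \<Longrightarrow> c \<in> B \<Longrightarrow> eq_mod (c \<otimes> a) (c \<otimes> b)"
proof -
  assume ab: "eq_mod a b" and c: "c \<in> B"
  then have "c \<otimes> a \<ominus> c \<otimes> b = c \<otimes> (a \<ominus> b)" using B_carrier eq_modD by algebra
  then show ?thesis
    using ab c ideal_in_lmult[OF ideal_Z] subringE(6)[OF subring_B] by (simp add: eq_mod_def)
qed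

lemma eq_mod_rmult: "eq_mod a b \<Longrightarrow> c \<in> B \<Longrightarrow> eq_mod (a \<otimes> c) (b \<otimes> c)"
proof -
  assume ab: "eq_mod a b" and c: "c \<in> B"
  then have "a \<otimes> c \<ominus> b \<otimes> c = (a \<ominus> b) \<otimes> c" using B_carrier eq_modD by algebra
  then show ?thesis
    using ab c ideal_in_rmult[OF ideal_Z] subringE(6)[OF subring_B] by (simp add: eq_mod_def)
qed

lemma eq_mod_mult: "eq_mod a b \<Longrightarrow> eq_mod c d \<Longrightarrow> eq_mod (a \<otimes> c) (b \<otimes> d)"
  by (meson eq_modD eq_mod_lmult eq_mod_rmult eq_mod_trans)

lemma eq_mod_add_Z: "a \<in> B \<Longrightarrow> z \<in> Z \<Longrightarrow> eq_mod (a \<oplus> z) a"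
proof -
  assume a: "a \<in> B" and z: "z \<in> Z"
  then have "a \<in> carrier R" "z \<in> carrier R" using B_carrier Z_sub_B by auto
  then have "(a \<oplus> z) \<ominus> a = z" by algebra
  then show ?thesis using a z Z_sub_B subringE(7)[OF subring_B] by (auto simp: eq_mod_def)
qed

lemma eq_mod_mem_ideal: "eq_mod a b \<Longrightarrow> ideal_in R B I \<Longrightarrow> Z \<subseteq> I \<Longrightarrow> b \<in> I \<Longrightarrow> a \<in> I"
proof -
  assume ab: "eq_mod a b" and I: "ideal_in R B I" and "Z \<subseteq> I" and "b \<in> I"
  then have "a = (a \<ominus> b) \<oplus> b" using B_carrier eq_modD by algebra
  then show "a \<in> I" using ab I \<open>Z \<subseteq> I\<close> \<open>b \<in> I\<close> ideal_in_add eq_modD(3) by (metis subsetD)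
qed

end

section \<open>Adjoining an element that commutes modulo an ideal\<close>

fun polys_below :: "('a, 'b) ring_scheme \<Rightarrow> 'a set \<Rightarrow> 'a \<Rightarrow> nat \<Rightarrow> 'a set" where
  "polys_below R A t 0 = {\<zero>\<^bsub>R\<^esub>}"
| "polys_below R A t (Suc d) = {p \<oplus>\<^bsub>R\<^esub> r \<otimes>\<^bsub>R\<^esub> t [^]\<^bsub>R\<^esub> d | p r. p \<in> polys_below R A t d \<and> r \<in> A}"

locale commuting_extension = ideal_in_subring +
  fixes A :: "'a set" and t :: 'a
  assumes subring_A: "subring A R" and t_carrier: "t \<in> carrier R"
    and B_generated: "B = generate_ring R (A \<union> {t})"
    and t_commutes_mod: "r \<in> A \<Longrightarrow> t \<otimes> r \<ominus> r \<otimes> t \<in> Z"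
begin

abbreviation P where "P d \<equiv> polys_below R A t d"

lemma A_sub_B: "A \<subseteq> B" and t_in_B: "t \<in> B"
  unfolding B_generated by (auto intro: generate_ring.incl)

lemma A_carrier: "r \<in> A \<Longrightarrow> r \<in> carrier R"
  using A_sub_B B_carrier by blast

lemma t_pow_in_B: "t [^] (n::nat) \<in> B"
  using subring_pow[OF subring_B t_in_B] .

lemma t_eq_mod: "r \<in> A \<Longrightarrow> eq_mod (t \<otimes> r) (r \<otimes> t)"
  unfolding eq_mod_def using t_commutes_mod A_sub_B t_in_B subringE(6)[OF subring_B] by blast

lemma t_pow_eq_mod: "r \<in> A \<Longrightarrow> eq_mod (t [^] (n::nat) \<otimes> r) (r \<otimes> t [^] n)"
proof (induction n)
  case 0 then show ?case using A_sub_B A_carrier eq_mod_refl by auto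
next
  case (Suc n)
  have c: "r \<in> carrier R" "t [^] n \<in> carrier R" using Suc.prems A_carrier t_carrier by auto
  have "t [^] Suc n \<otimes> r = t [^] n \<otimes> (t \<otimes> r)" using c t_carrier by (simp add: m_assoc)
  moreover have "eq_mod (t [^] n \<otimes> (t \<otimes> r)) (t [^] n \<otimes> (r \<otimes> t))"
    using t_eq_mod[OF Suc.prems] t_pow_in_B by (rule eq_mod_lmult)
  moreover have "t [^] n \<otimes> (r \<otimes> t) = (t [^] n \<otimes> r) \<otimes> t" using c t_carrier by (simp add: m_assoc)
  moreover have "eq_mod ((t [^] n \<otimes> r) \<otimes> t) ((r \<otimes> t [^] n) \<otimes> t)"
    using Suc.IH[OF Suc.prems] t_in_B by (rule eq_mod_rmult)
  moreover have "(r \<otimes> t [^] n) \<otimes> t = r \<otimes> t [^] Suc n" using c t_carrier by (simp add: m_assoc)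
  ultimately show ?case by (metis eq_mod_trans)
qed

lemma polys_below_SucI: "p \<in> P d \<Longrightarrow> r \<in> A \<Longrightarrow> p \<oplus> r \<otimes> t [^] d \<in> P (Suc d)"
  by auto

lemma polys_below_SucE:
  "q \<in> P (Suc d) \<Longrightarrow> (\<And>p r. q = p \<oplus> r \<otimes> t [^] d \<Longrightarrow> p \<in> P d \<Longrightarrow> r \<in> A \<Longrightarrow> thesis) \<Longrightarrow> thesis"
  by auto

lemma polys_below_sub_B: "p \<in> P d \<Longrightarrow> p \<in> B"
proof (induction d arbitrary: p)
  case 0 then show ?case using subringE(2)[OF subring_B] by simp
next
  case (Suc d)
  then obtain q r where "p = q \<oplus> r \<otimes> t [^] d" "q \<in> P d" "r \<in> A" by (auto elim: polys_below_SucE)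
  then show ?case
    using Suc.IH A_sub_B t_pow_in_B subringE(6,7)[OF subring_B] by blast
qed

lemma polys_below_carrier: "p \<in> P d \<Longrightarrow> p \<in> carrier R"
  using polys_below_sub_B B_carrier by blast

lemma zero_in_polys_below: "\<zero> \<in> P d"
proof (induction d)
  case (Suc d)
  have "\<zero> \<oplus> \<zero> \<otimes> t [^] d \<in> P (Suc d)"
    using Suc subringE(2)[OF subring_A] by (intro polys_below_SucI)
  then show ?case using t_carrier by simp
qed simp

lemma polys_below_Suc_mono: "p \<in> P d \<Longrightarrow> p \<in> P (Suc d)"
proof -
  assume p: "p \<in> P d"
  have "p \<oplus> \<zero> \<otimes> t [^] d \<in> P (Suc d)" using p subringE(2)[OF subring_A] by (intro polys_below_SucI)
  then show ?thesis using t_carrier polys_below_carrier[OF p] by simp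
qed

lemma polys_below_mono: "d \<le> e \<Longrightarrow> P d \<subseteq> P e"
  using lift_Suc_mono_le[of P] polys_below_Suc_mono by blast

lemma polys_below_add: "p \<in> P d \<Longrightarrow> q \<in> P d \<Longrightarrow> p \<oplus> q \<in> P d"
proof (induction d arbitrary: p q)
  case (Suc d)
  from Suc.prems obtain p1 r1 q1 r2 where p: "p = p1 \<oplus> r1 \<otimes> t [^] d" "p1 \<in> P d" "r1 \<in> A"
    and q: "q = q1 \<oplus> r2 \<otimes> t [^] d" "q1 \<in> P d" "r2 \<in> A" by (auto elim!: polys_below_SucE)
  have "p \<oplus> q = (p1 \<oplus> q1) \<oplus> (r1 \<oplus> r2) \<otimes> t [^] d"
    using p q polys_below_carrier A_carrier t_carrier by (simp add: l_distr a_ac)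
  then show ?case
    using polys_below_SucI[OF Suc.IH[OF p(2) q(2)] subringE(7)[OF subring_A p(3) q(3)]] by simp
qed simp

lemma polys_below_neg: "p \<in> P d \<Longrightarrow> \<ominus> p \<in> P d"
proof (induction d arbitrary: p)
  case (Suc d)
  from Suc.prems obtain p1 r1 where p: "p = p1 \<oplus> r1 \<otimes> t [^] d" "p1 \<in> P d" "r1 \<in> A"
    by (auto elim!: polys_below_SucE)
  have "\<ominus> p = (\<ominus> p1) \<oplus> (\<ominus> r1) \<otimes> t [^] d"
    using p polys_below_carrier A_carrier t_carrier by (simp add: minus_add l_minus)
  then show ?case using polys_below_SucI[OF Suc.IH[OF p(2)] subringE(5)[OF subring_A p(3)]] by simp
qed simp

lemma polys_below_lmult: "s \<in> A \<Longrightarrow> p \<in> P d \<Longrightarrow> s \<otimes> p \<in> P d"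
proof (induction d arbitrary: p)
  case 0 then show ?case using A_carrier by simp
next
  case (Suc d)
  from Suc.prems obtain p1 r1 where p: "p = p1 \<oplus> r1 \<otimes> t [^] d" "p1 \<in> P d" "r1 \<in> A"
    by (auto elim!: polys_below_SucE)
  have "s \<otimes> p = (s \<otimes> p1) \<oplus> (s \<otimes> r1) \<otimes> t [^] d"
    using p Suc.prems polys_below_carrier A_carrier t_carrier by (simp add: r_distr m_assoc)
  then show ?case
    using polys_below_SucI[OF Suc.IH[OF Suc.prems(1) p(2)] subringE(6)[OF subring_A Suc.prems(1) p(3)]]
    by simp
qed

lemma polys_below_mult_t: "p \<in> P d \<Longrightarrow> p \<otimes> t \<in> P (Suc d)"
proof (induction d arbitrary: p)
  case 0 then show ?case using t_carrier zero_in_polys_below[of 1] by simp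
next
  case (Suc d)
  from Suc.prems obtain p1 r1 where p: "p = p1 \<oplus> r1 \<otimes> t [^] d" "p1 \<in> P d" "r1 \<in> A"
    by (auto elim!: polys_below_SucE)
  have "p \<otimes> t = (p1 \<otimes> t) \<oplus> r1 \<otimes> t [^] (Suc d)"
    using p polys_below_carrier A_carrier t_carrier by (simp add: l_distr m_assoc)
  then show ?case using Suc p by (metis polys_below_SucI)
qed

lemma polys_below_mult_t_pow: "p \<in> P d \<Longrightarrow> p \<otimes> t [^] (e::nat) \<in> P (d + e)"
proof (induction e)
  case 0 then show ?case using polys_below_carrier by simp
next
  case (Suc e)
  have "p \<otimes> t [^] (Suc e) = (p \<otimes> t [^] e) \<otimes> t"
    using Suc polys_below_carrier t_carrier by (simp add: m_assoc)
  then show ?case using polys_below_mult_t[OF Suc.IH[OF Suc.prems]] by simp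
qed

lemma polys_below_rmult: "s \<in> A \<Longrightarrow> p \<in> P d \<Longrightarrow> \<exists>q\<in>P d. eq_mod (p \<otimes> s) q"
proof (induction d arbitrary: p)
  case 0 then show ?case using A_carrier subringE(2)[OF subring_B] by (simp add: eq_mod_refl)
next
  case (Suc d)
  from Suc.prems obtain p1 r1 where p: "p = p1 \<oplus> r1 \<otimes> t [^] d" "p1 \<in> P d" "r1 \<in> A"
    by (auto elim!: polys_below_SucE)
  obtain q1 where q1: "q1 \<in> P d" "eq_mod (p1 \<otimes> s) q1" using Suc p by blast
  have r1B: "r1 \<in> B" using p A_sub_B by blast
  have "p \<otimes> s = (p1 \<otimes> s) \<oplus> r1 \<otimes> (t [^] d \<otimes> s)"
    using p Suc.prems polys_below_carrier A_carrier t_carrier by (simp add: l_distr m_assoc)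
  moreover have "eq_mod ((p1 \<otimes> s) \<oplus> r1 \<otimes> (t [^] d \<otimes> s)) (q1 \<oplus> r1 \<otimes> (s \<otimes> t [^] d))"
    using q1(2) eq_mod_lmult[OF t_pow_eq_mod[OF Suc.prems(1)] r1B] by (rule eq_mod_add)
  moreover have "q1 \<oplus> r1 \<otimes> (s \<otimes> t [^] d) = q1 \<oplus> (r1 \<otimes> s) \<otimes> t [^] d"
    using q1 p Suc.prems polys_below_carrier A_carrier t_carrier by (simp add: m_assoc)
  moreover have "q1 \<oplus> (r1 \<otimes> s) \<otimes> t [^] d \<in> P (Suc d)"
    using q1 p Suc.prems subringE(6)[OF subring_A] by (intro polys_below_SucI) auto
  ultimately show ?case by metis
qed

lemma polys_below_mult: "p \<in> P d \<Longrightarrow> q \<in> P e \<Longrightarrow> \<exists>u\<in>P (d + e). eq_mod (p \<otimes> q) u"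
proof (induction e arbitrary: q)
  case 0
  then show ?case
    using polys_below_carrier zero_in_polys_below subringE(2)[OF subring_B] by (auto intro: eq_mod_refl)
next
  case (Suc e)
  from Suc.prems obtain q1 s where q: "q = q1 \<oplus> s \<otimes> t [^] e" "q1 \<in> P e" "s \<in> A"
    by (auto elim!: polys_below_SucE)
  obtain u1 where u1: "u1 \<in> P (d + e)" "eq_mod (p \<otimes> q1) u1" using Suc q by blast
  obtain v where v: "v \<in> P d" "eq_mod (p \<otimes> s) v" using polys_below_rmult[OF q(3) Suc.prems(1)] by blast
  have "p \<otimes> q = p \<otimes> q1 \<oplus> (p \<otimes> s) \<otimes> t [^] e"
    using q Suc.prems polys_below_carrier A_carrier t_carrier by (simp add: r_distr m_assoc)
  moreover have "eq_mod (p \<otimes> q1 \<oplus> (p \<otimes> s) \<otimes> t [^] e) (u1 \<oplus> v \<otimes> t [^] e)"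
    using u1(2) eq_mod_rmult[OF v(2) t_pow_in_B] by (rule eq_mod_add)
  moreover have "u1 \<oplus> v \<otimes> t [^] e \<in> P (d + Suc e)"
  proof (rule polys_below_add)
    show "u1 \<in> P (d + Suc e)" "v \<otimes> t [^] e \<in> P (d + Suc e)"
      using u1(1) polys_below_mult_t_pow[OF v(1), of e] polys_below_mono[of "d + e" "d + Suc e"] by auto
  qed
  ultimately show ?case by metis
qed

lemma coeff_in_polys_below: "r \<in> A \<Longrightarrow> r \<in> P 1"
  using polys_below_SucI[OF zero_in_polys_below, of r 0] A_carrier by simp

lemma t_in_polys_below: "t \<in> P 2"
proof -
  have "\<zero> \<oplus> \<one> \<otimes> t [^] (1::nat) \<in> P (Suc 1)"
    using coeff_in_polys_below[OF subringE(2)[OF subring_A]] subringE(3)[OF subring_A]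
    by (intro polys_below_SucI) auto
  then show ?thesis using t_carrier by (simp add: numeral_2_eq_2)
qed

lemma eq_mod_polys_below: "b \<in> B \<Longrightarrow> \<exists>d. \<exists>p\<in>P d. eq_mod b p"
proof -
  assume "b \<in> B"
  then have "b \<in> generate_ring R (A \<union> {t})" using B_generated by simp
  then show ?thesis
  proof (induction rule: generate_ring.induct)
    case one
    show ?case using coeff_in_polys_below subringE(3)[OF subring_A] subringE(3)[OF subring_B] eq_mod_refl
      by blast
  next
    case (incl a)
    then show ?case using coeff_in_polys_below t_in_polys_below A_sub_B t_in_B eq_mod_refl by blast
  next
    case (a_inv a)
    then show ?case using polys_below_neg eq_mod_neg by blast
  next
    case (eng_add a b)
    then obtain d p e q where "p \<in> P d" "eq_mod a p" "q \<in> P e" "eq_mod b q" by blast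
    moreover have "P d \<subseteq> P (max d e)" "P e \<subseteq> P (max d e)" by (simp_all add: polys_below_mono)
    ultimately show ?case using polys_below_add eq_mod_add by blast
  next
    case (eng_mult a b)
    then obtain d p e q where "p \<in> P d" "eq_mod a p" "q \<in> P e" "eq_mod b q" by blast
    then show ?case using polys_below_mult eq_mod_mult eq_mod_trans by meson
  qed
qed

definition lead_coeffs :: "nat \<Rightarrow> 'a set \<Rightarrow> 'a set" where
  "lead_coeffs d I = {r \<in> A. \<exists>f\<in>I. \<exists>p\<in>P d. eq_mod f (p \<oplus> r \<otimes> t [^] d)}"

lemma lead_coeffsI: "r \<in> A \<Longrightarrow> f \<in> I \<Longrightarrow> p \<in> P d \<Longrightarrow> eq_mod f (p \<oplus> r \<otimes> t [^] d) \<Longrightarrow> r \<in> lead_coeffs d I"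
  unfolding lead_coeffs_def by blast

lemma lead_coeffsE:
  assumes "r \<in> lead_coeffs d I"
  obtains f p where "r \<in> A" "f \<in> I" "p \<in> P d" "eq_mod f (p \<oplus> r \<otimes> t [^] d)"
  using assms unfolding lead_coeffs_def by blast

lemma lead_coeffs_Suc_mono: assumes I: "ideal_in R B I" shows "lead_coeffs d I \<subseteq> lead_coeffs (Suc d) I"
proof
  fix r assume "r \<in> lead_coeffs d I"
  then obtain f p where r: "r \<in> A" "f \<in> I" "p \<in> P d" "eq_mod f (p \<oplus> r \<otimes> t [^] d)"
    by (rule lead_coeffsE)
  have "eq_mod (f \<otimes> t) ((p \<oplus> r \<otimes> t [^] d) \<otimes> t)" using r(4) t_in_B by (rule eq_mod_rmult)
  moreover have "(p \<oplus> r \<otimes> t [^] d) \<otimes> t = p \<otimes> t \<oplus> r \<otimes> t [^] Suc d"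
    using r polys_below_carrier A_carrier t_carrier by (simp add: l_distr m_assoc)
  ultimately show "r \<in> lead_coeffs (Suc d) I"
    using lead_coeffsI[OF r(1) ideal_in_rmult[OF I r(2) t_in_B] polys_below_mult_t[OF r(3)]] by simp
qed

lemma lead_coeffs_mono:
  assumes "ideal_in R B I'" and "d \<le> d'" and "I \<subseteq> I'"
  shows "lead_coeffs d I \<subseteq> lead_coeffs d' I'"
proof -
  have "lead_coeffs d I \<subseteq> lead_coeffs d I'" using assms(3) unfolding lead_coeffs_def by blast
  also have "\<dots> \<subseteq> lead_coeffs d' I'"
    using lift_Suc_mono_le[of "\<lambda>d. lead_coeffs d I'"] lead_coeffs_Suc_mono[OF assms(1)] assms(2) by blast
  finally show ?thesis .
qed

lemma Z_Int_A_sub_lead_coeffs: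
  assumes I: "ideal_in R B I" and "Z \<subseteq> I"
  shows "Z \<inter> A \<subseteq> lead_coeffs d I"
proof
  fix z assume z: "z \<in> Z \<inter> A"
  then have "z \<otimes> t [^] d \<in> I" using assms ideal_in_rmult[OF I _ t_pow_in_B] by blast
  moreover have "z \<otimes> t [^] d = \<zero> \<oplus> z \<otimes> t [^] d" using z A_carrier t_carrier by simp
  moreover have "z \<otimes> t [^] d \<in> B" using calculation(1) ideal_in_subset[OF I] by blast
  ultimately show "z \<in> lead_coeffs d I"
    using lead_coeffsI[OF _ _ zero_in_polys_below eq_mod_refl] z by auto
qed

context
  fixes I assumes I: "ideal_in R B I"
begin

lemma zero_in_lead_coeffs: "\<zero> \<in> lead_coeffs d I"
proof -
  have "\<zero> = \<zero> \<oplus> \<zero> \<otimes> t [^] d" using t_carrier by simp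
  then show ?thesis
    using ideal_in_zero[OF I] zero_in_polys_below subringE(2)[OF subring_A] subringE(2)[OF subring_B]
    by (metis eq_mod_refl lead_coeffsI)
qed

lemma lead_coeffs_add: "a \<in> lead_coeffs d I \<Longrightarrow> b \<in> lead_coeffs d I \<Longrightarrow> a \<oplus> b \<in> lead_coeffs d I"
proof -
  assume "a \<in> lead_coeffs d I" "b \<in> lead_coeffs d I"
  then obtain f p g q where a: "a \<in> A" "f \<in> I" "p \<in> P d" "eq_mod f (p \<oplus> a \<otimes> t [^] d)"
    and b: "b \<in> A" "g \<in> I" "q \<in> P d" "eq_mod g (q \<oplus> b \<otimes> t [^] d)" by (metis lead_coeffsE)
  have "eq_mod (f \<oplus> g) ((p \<oplus> a \<otimes> t [^] d) \<oplus> (q \<oplus> b \<otimes> t [^] d))" using a b eq_mod_add by blast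
  moreover have "(p \<oplus> a \<otimes> t [^] d) \<oplus> (q \<oplus> b \<otimes> t [^] d) = (p \<oplus> q) \<oplus> (a \<oplus> b) \<otimes> t [^] d"
    using a b polys_below_carrier A_carrier t_carrier by (simp add: l_distr a_ac)
  ultimately show ?thesis
    using lead_coeffsI[OF subringE(7)[OF subring_A a(1) b(1)] ideal_in_add[OF I a(2) b(2)]
        polys_below_add[OF a(3) b(3)]] by simp
qed

lemma lead_coeffs_neg: "a \<in> lead_coeffs d I \<Longrightarrow> \<ominus> a \<in> lead_coeffs d I"
proof -
  assume "a \<in> lead_coeffs d I"
  then obtain f p where a: "a \<in> A" "f \<in> I" "p \<in> P d" "eq_mod f (p \<oplus> a \<otimes> t [^] d)"
    by (rule lead_coeffsE)
  have "eq_mod (\<ominus> f) (\<ominus> (p \<oplus> a \<otimes> t [^] d))" using a eq_mod_neg by blast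
  moreover have "\<ominus> (p \<oplus> a \<otimes> t [^] d) = (\<ominus> p) \<oplus> (\<ominus> a) \<otimes> t [^] d"
    using a polys_below_carrier A_carrier t_carrier by (simp add: minus_add l_minus)
  ultimately show ?thesis
    using lead_coeffsI[OF subringE(5)[OF subring_A a(1)] ideal_in_neg[OF I a(2)] polys_below_neg[OF a(3)]]
    by simp
qed

lemma lead_coeffs_lmult: "a \<in> lead_coeffs d I \<Longrightarrow> s \<in> A \<Longrightarrow> s \<otimes> a \<in> lead_coeffs d I"
proof -
  assume "a \<in> lead_coeffs d I" and s: "s \<in> A"
  then obtain f p where a: "a \<in> A" "f \<in> I" "p \<in> P d" "eq_mod f (p \<oplus> a \<otimes> t [^] d)"
    by (metis lead_coeffsE)
  have "eq_mod (s \<otimes> f) (s \<otimes> (p \<oplus> a \<otimes> t [^] d))" using a(4) s A_sub_B by (blast intro: eq_mod_lmult)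
  moreover have "s \<otimes> (p \<oplus> a \<otimes> t [^] d) = s \<otimes> p \<oplus> (s \<otimes> a) \<otimes> t [^] d"
    using a s polys_below_carrier A_carrier t_carrier by (simp add: r_distr m_assoc)
  ultimately show ?thesis
    using lead_coeffsI[OF subringE(6)[OF subring_A s a(1)] ideal_in_lmult[OF I a(2)] polys_below_lmult[OF s a(3)]]
      s A_sub_B by auto
qed

text \<open>Unlike on the left, \<open>s\<close> has to be moved past \<open>t [^] d\<close> here, which only works modulo \<open>Z\<close>.\<close>
lemma lead_coeffs_rmult: "a \<in> lead_coeffs d I \<Longrightarrow> s \<in> A \<Longrightarrow> a \<otimes> s \<in> lead_coeffs d I"
proof -
  assume "a \<in> lead_coeffs d I" and s: "s \<in> A"
  then obtain f p where a: "a \<in> A" "f \<in> I" "p \<in> P d" "eq_mod f (p \<oplus> a \<otimes> t [^] d)"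
    by (metis lead_coeffsE)
  have sB: "s \<in> B" and aB: "a \<in> B" using s a A_sub_B by auto
  obtain q where q: "q \<in> P d" "eq_mod (p \<otimes> s) q" using polys_below_rmult[OF s a(3)] by blast
  have "eq_mod (f \<otimes> s) ((p \<oplus> a \<otimes> t [^] d) \<otimes> s)" using a(4) sB by (rule eq_mod_rmult)
  moreover have "(p \<oplus> a \<otimes> t [^] d) \<otimes> s = p \<otimes> s \<oplus> a \<otimes> (t [^] d \<otimes> s)"
    using a s polys_below_carrier A_carrier t_carrier by (simp add: l_distr m_assoc)
  moreover have "eq_mod (p \<otimes> s \<oplus> a \<otimes> (t [^] d \<otimes> s)) (q \<oplus> a \<otimes> (s \<otimes> t [^] d))"
    using q(2) eq_mod_lmult[OF t_pow_eq_mod[OF s] aB] by (rule eq_mod_add)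
  moreover have "q \<oplus> a \<otimes> (s \<otimes> t [^] d) = q \<oplus> (a \<otimes> s) \<otimes> t [^] d"
    using a s q polys_below_carrier A_carrier t_carrier by (simp add: m_assoc)
  ultimately have "eq_mod (f \<otimes> s) (q \<oplus> (a \<otimes> s) \<otimes> t [^] d)" by (metis eq_mod_trans)
  then show ?thesis
    using lead_coeffsI[OF subringE(6)[OF subring_A a(1) s] ideal_in_rmult[OF I a(2) sB] q(1)] by simp
qed

lemma ideal_in_lead_coeffs: "ideal_in R A (lead_coeffs d I)"
proof -
  have "lead_coeffs d I \<subseteq> A" unfolding lead_coeffs_def by blast
  then show ?thesis
    unfolding ideal_in_def
    by (simp add: zero_in_lead_coeffs lead_coeffs_add lead_coeffs_neg lead_coeffs_lmult lead_coeffs_rmult)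
qed

end

text \<open>Induction on the degree: subtracting an element of \<open>I\<close> with the same leading coefficient
  lowers the degree.\<close>
lemma subset_by_lead_coeffs:
  assumes I: "ideal_in R B I" and J: "ideal_in R B J" and "Z \<subseteq> I" and "I \<subseteq> J"
    and L: "\<And>d. lead_coeffs d J \<subseteq> lead_coeffs d I"
  shows "J \<subseteq> I"
proof -
  have "g \<in> I" if "g \<in> J" "q \<in> P d" "eq_mod g q" for d g q
    using that
  proof (induction d arbitrary: g q)
    case 0
    then have "g \<ominus> \<zero> \<in> Z" using eq_modD(3) by auto
    then show ?case using 0 B_carrier eq_modD(1) assms(3) by (auto simp: a_minus_def)
  next
    case (Suc d)
    then obtain p r where q: "q = p \<oplus> r \<otimes> t [^] d" "p \<in> P d" "r \<in> A" by (auto elim!: polys_below_SucE)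
    then have "r \<in> lead_coeffs d J" using Suc.prems by (auto intro: lead_coeffsI)
    then obtain f p' where f: "f \<in> I" "p' \<in> P d" "eq_mod f (p' \<oplus> r \<otimes> t [^] d)"
      using L by (metis lead_coeffsE subsetD)
    have "g \<ominus> f \<in> J" using Suc.prems f \<open>I \<subseteq> J\<close> ideal_in_minus[OF J] by blast
    moreover have "eq_mod (g \<ominus> f) ((p \<oplus> r \<otimes> t [^] d) \<ominus> (p' \<oplus> r \<otimes> t [^] d))"
      using Suc.prems(3) q(1) f(3) by (metis eq_mod_minus)
    moreover have "(p \<oplus> r \<otimes> t [^] d) \<ominus> (p' \<oplus> r \<otimes> t [^] d) = p \<ominus> p'"
    proof -
      have "p \<in> carrier R" "p' \<in> carrier R" "r \<otimes> t [^] d \<in> carrier R"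
        using q f polys_below_carrier A_carrier t_carrier by auto
      then show ?thesis by algebra
    qed
    moreover have "p \<ominus> p' \<in> P d" using q f polys_below_add polys_below_neg by (simp add: a_minus_def)
    ultimately have "g \<ominus> f \<in> I" using Suc.IH by metis
    moreover have "g = (g \<ominus> f) \<oplus> f"
    proof -
      have "g \<in> carrier R" "f \<in> carrier R" using Suc.prems f ideal_in_subset[OF J] \<open>I \<subseteq> J\<close> B_carrier by auto
      then show ?thesis by algebra
    qed
    ultimately show "g \<in> I" using f ideal_in_add[OF I] by metis
  qed
  then show ?thesis using eq_mod_polys_below ideal_in_subset[OF J] by blast
qed

text \<open>All the chains \<open>lead_coeffs d (I m)\<close> stabilise simultaneously: the diagonal chain
  \<open>lead_coeffs m (I m)\<close> does so from some \<open>N\<close> on, which bounds the chains with \<open>d \<ge> N\<close>, and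
  the finitely many remaining ones stabilise individually.\<close>
lemma lead_coeffs_stabilise:
  assumes acc_A: "acc_ideals_above R A (Z \<inter> A)"
    and I: "\<And>m. ideal_in R B (I m)" and Z_sub: "\<And>m. Z \<subseteq> I m" and chain: "\<And>m. I m \<subseteq> I (Suc m)"
  obtains K where "\<And>m d. m \<ge> K \<Longrightarrow> lead_coeffs d (I m) \<subseteq> lead_coeffs d (I K)"
proof -
  have mono: "m \<le> m' \<Longrightarrow> I m \<subseteq> I m'" for m m' using lift_Suc_mono_le[of I, OF chain] .
  note L_ideal = ideal_in_lead_coeffs[OF I] and L_Z = Z_Int_A_sub_lead_coeffs[OF I Z_sub]
  have "\<exists>N. \<forall>k\<ge>N. lead_coeffs k (I k) = lead_coeffs N (I N)"
  proof (rule acc_ideals_aboveD[OF acc_A L_ideal L_Z])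
    show "lead_coeffs m (I m) \<subseteq> lead_coeffs (Suc m) (I (Suc m))" for m
      using lead_coeffs_mono[OF I] chain by simp
  qed
  then obtain N where N: "\<And>k. k \<ge> N \<Longrightarrow> lead_coeffs k (I k) = lead_coeffs N (I N)" by blast
  have "\<exists>M. \<forall>m\<ge>M. lead_coeffs d (I m) = lead_coeffs d (I M)" for d
  proof (rule acc_ideals_aboveD[OF acc_A])
    show "lead_coeffs d (I m) \<subseteq> lead_coeffs d (I (Suc m))" for m
      using lead_coeffs_mono[OF I order_refl chain] .
  qed (rule L_ideal, rule L_Z)
  then obtain M where M: "\<And>d m. m \<ge> M d \<Longrightarrow> lead_coeffs d (I m) = lead_coeffs d (I (M d))" by metis
  define K where "K = Max (insert N (M ` {..<N}))"
  have "N \<le> K" and M_le: "\<And>d. d < N \<Longrightarrow> M d \<le> K" by (auto simp: K_def)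
  have "lead_coeffs d (I m) \<subseteq> lead_coeffs d (I K)" if "m \<ge> K" for m d
  proof (cases "d < N")
    case True
    then show ?thesis using M[of d m] M[of d K] M_le[OF True] that by simp
  next
    case False
    have "lead_coeffs d (I m) \<subseteq> lead_coeffs (max d m) (I (max d m))"
      using lead_coeffs_mono[OF I _ mono[of m "max d m"], of d "max d m"] by simp
    also have "\<dots> = lead_coeffs N (I N)" using N[of "max d m"] False by simp
    also have "\<dots> \<subseteq> lead_coeffs d (I K)" using lead_coeffs_mono[OF I] False mono[OF \<open>N \<le> K\<close>] by simp
    finally show ?thesis .
  qed
  then show ?thesis using that by blast
qed

theorem acc_ideals_above_commuting_extension:
  assumes acc_A: "acc_ideals_above R A (Z \<inter> A)"
  shows "acc_ideals_above R B Z"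
proof (rule acc_ideals_aboveI)
  fix I :: "nat \<Rightarrow> 'a set"
  assume I: "\<And>m. ideal_in R B (I m)" and Z_sub: "\<And>m. Z \<subseteq> I m" and chain: "\<And>m. I m \<subseteq> I (Suc m)"
  obtain K where K: "\<And>m d. m \<ge> K \<Longrightarrow> lead_coeffs d (I m) \<subseteq> lead_coeffs d (I K)"
    using lead_coeffs_stabilise[OF acc_A, of I] I Z_sub chain by blast
  have "I m = I K" if "m \<ge> K" for m
    using subset_by_lead_coeffs[OF I I Z_sub _ K[OF that]] lift_Suc_mono_le[of I, OF chain that] by blast
  then show "\<exists>N. \<forall>m\<ge>N. I m = I N" by blast
qed

end

section \<open>Adjoining a one-sided inverse pair\<close>

lemma (in monoid) nat_pow_commutes:
  assumes "a \<in> carrier G" "b \<in> carrier G" "a \<otimes> b = b \<otimes> a"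
  shows "a [^] (n::nat) \<otimes> b = b \<otimes> a [^] n"
proof (induction n)
  case (Suc n)
  have "a [^] Suc n \<otimes> b = a [^] n \<otimes> (a \<otimes> b)" using assms by (simp add: m_assoc)
  also have "\<dots> = (a [^] n \<otimes> b) \<otimes> a" using assms by (simp add: m_assoc)
  also have "\<dots> = b \<otimes> a [^] Suc n" using Suc assms by (simp add: m_assoc)
  finally show ?case .
qed (use assms in simp)

lemma (in monoid) nat_pow_mult_one_sided_inverse:
  assumes "x \<in> carrier G" "y \<in> carrier G" "y \<otimes> x = \<one>"
  shows "y [^] (j::nat) \<otimes> x [^] (k::nat) = (if j \<le> k then x [^] (k - j) else y [^] (j - k))"
proof (induction j arbitrary: k)
  case (Suc j)
  show ?case
  proof (cases k)
    case (Suc k')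
    have "y [^] Suc j \<otimes> x [^] Suc k' = (y [^] j \<otimes> y) \<otimes> (x \<otimes> x [^] k')"
      using nat_pow_Suc2[OF assms(1)] by simp
    also have "\<dots> = y [^] j \<otimes> ((y \<otimes> x) \<otimes> x [^] k')" using assms(1,2) by (simp add: m_assoc)
    finally have "y [^] Suc j \<otimes> x [^] Suc k' = y [^] j \<otimes> ((y \<otimes> x) \<otimes> x [^] k')" .
    then show ?thesis using Suc Suc.IH assms by simp
  qed (use assms in simp)
qed (use assms in simp)

inductive_set add_span :: "('a, 'b) ring_scheme \<Rightarrow> 'a set \<Rightarrow> 'a set" for R and U where
  incl: "a \<in> U \<Longrightarrow> a \<in> add_span R U"
| zero: "\<zero>\<^bsub>R\<^esub> \<in> add_span R U"
| add: "a \<in> add_span R U \<Longrightarrow> b \<in> add_span R U \<Longrightarrow> a \<oplus>\<^bsub>R\<^esub> b \<in> add_span R U"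
| neg: "a \<in> add_span R U \<Longrightarrow> \<ominus>\<^bsub>R\<^esub> a \<in> add_span R U"

context ring
begin

lemma add_span_carrier: "a \<in> add_span R U \<Longrightarrow> U \<subseteq> carrier R \<Longrightarrow> a \<in> carrier R"
  by (induction rule: add_span.induct) auto

lemma add_span_least: "subring S R \<Longrightarrow> U \<subseteq> S \<Longrightarrow> add_span R U \<subseteq> S"
proof
  fix a assume "a \<in> add_span R U" and S: "subring S R" "U \<subseteq> S"
  then show "a \<in> S" by (induction rule: add_span.induct) (use subringE[OF S(1)] in auto)
qed

lemma add_span_mult:
  assumes U: "U \<subseteq> carrier R" and V: "V \<subseteq> carrier R"
    and UV: "\<And>u v. u \<in> U \<Longrightarrow> v \<in> V \<Longrightarrow> u \<otimes> v \<in> add_span R W"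
    and a: "a \<in> add_span R U" and b: "b \<in> add_span R V"
  shows "a \<otimes> b \<in> add_span R W"
proof -
  have cV: "v \<in> carrier R" if "v \<in> add_span R V" for v using add_span_carrier[OF that V] .
  have gen: "u \<otimes> b \<in> add_span R W" if u: "u \<in> U" for u
    using b
  proof (induction rule: add_span.induct)
    case (incl v) then show ?case using UV u by blast
  next
    case zero
    have "u \<in> carrier R" using u U by blast
    then show ?case by (auto intro: add_span.zero)
  next
    case (add v1 v2)
    have "u \<in> carrier R" using u U by blast
    then show ?case using add cV by (auto simp: r_distr intro: add_span.add)
  next
    case (neg v)
    have "u \<in> carrier R" using u U by blast
    then show ?case using neg cV by (auto simp: r_minus intro: add_span.neg)
  qed
  have cU: "u \<in> carrier R" if "u \<in> add_span R U" for u using add_span_carrier[OF that U] .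
  from a show ?thesis
  proof (induction rule: add_span.induct)
    case (incl u) then show ?case by (rule gen)
  next
    case zero then show ?case using b cV by (auto intro: add_span.zero)
  next
    case (add u1 u2) then show ?case using b cU cV by (auto simp: l_distr intro: add_span.add)
  next
    case (neg u) then show ?case using b cU cV by (auto simp: l_minus intro: add_span.neg)
  qed
qed

end

locale one_sided_inverse_extension = ideal_in_subring +
  fixes A :: "'a set" and x :: 'a and y :: 'a
  assumes subring_A: "subring A R" and x_carrier: "x \<in> carrier R" and y_carrier: "y \<in> carrier R"
    and B_generated: "B = generate_ring R (A \<union> {x, y})"
    and yx: "y \<otimes> x = \<one>"
    and x_commutes: "b \<in> A \<Longrightarrow> x \<otimes> b = b \<otimes> x" and y_commutes: "b \<in> A \<Longrightarrow> y \<otimes> b = b \<otimes> y"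
begin

definition p :: 'a where "p = \<one> \<ominus> x \<otimes> y"

lemma A_sub_B: "A \<subseteq> B" and x_in_B: "x \<in> B" and y_in_B: "y \<in> B"
  unfolding B_generated by (auto intro: generate_ring.incl)

lemma A_carrier: "b \<in> A \<Longrightarrow> b \<in> carrier R"
  using A_sub_B B_carrier by blast

lemma p_carrier: "p \<in> carrier R"
  unfolding p_def using x_carrier y_carrier by simp

lemma p_in_B: "p \<in> B"
  unfolding p_def using x_in_B y_in_B subringE(3,6)[OF subring_B] subring_minus[OF subring_B] by blast

lemma x_pow_in_B: "x [^] (n::nat) \<in> B" and y_pow_in_B: "y [^] (n::nat) \<in> B"
  using subring_pow[OF subring_B] x_in_B y_in_B by auto

lemma y_mult_p: "y \<otimes> p = \<zero>"
  unfolding p_def using x_carrier y_carrier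
  by (simp add: a_minus_def r_distr r_minus m_assoc[symmetric] yx r_neg)

lemma p_mult_x: "p \<otimes> x = \<zero>"
  unfolding p_def using x_carrier y_carrier
  by (simp add: a_minus_def l_distr l_minus m_assoc yx r_neg)

lemma p_idem: "p \<otimes> p = p"
proof -
  have "p \<otimes> p = p \<otimes> (\<one> \<ominus> x \<otimes> y)" by (simp only: p_def)
  also have "\<dots> = p \<ominus> (p \<otimes> x) \<otimes> y"
    using p_carrier x_carrier y_carrier by (simp add: a_minus_def r_distr r_minus m_assoc)
  finally show ?thesis using p_mult_x p_carrier y_carrier by (simp add: a_minus_def)
qed

lemma x_pow_commutes: "b \<in> A \<Longrightarrow> x [^] (n::nat) \<otimes> b = b \<otimes> x [^] n"
  by (rule nat_pow_commutes[OF x_carrier A_carrier x_commutes])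

lemma y_pow_commutes: "b \<in> A \<Longrightarrow> y [^] (n::nat) \<otimes> b = b \<otimes> y [^] n"
  by (rule nat_pow_commutes[OF y_carrier A_carrier y_commutes])

lemma p_commutes: "b \<in> A \<Longrightarrow> p \<otimes> b = b \<otimes> p"
proof -
  assume b: "b \<in> A"
  have c: "b \<in> carrier R" using A_carrier[OF b] .
  have "x \<otimes> y \<otimes> b = b \<otimes> (x \<otimes> y)"
    using x_commutes[OF b] y_commutes[OF b] c x_carrier y_carrier by (metis m_assoc)
  then show ?thesis
    unfolding p_def using c x_carrier y_carrier by (simp add: a_minus_def l_distr r_distr l_minus r_minus)
qed

lemma y_pow_mult_x_pow: "y [^] (j::nat) \<otimes> x [^] (k::nat) = (if j \<le> k then x [^] (k - j) else y [^] (j - k))"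
  using nat_pow_mult_one_sided_inverse[OF x_carrier y_carrier yx] .

lemma y_pow_mult_p: "j > 0 \<Longrightarrow> y [^] (j::nat) \<otimes> p = \<zero>"
proof -
  assume "j > 0"
  then obtain i where "j = Suc i" using gr0_implies_Suc by blast
  then have "y [^] j \<otimes> p = y [^] i \<otimes> (y \<otimes> p)" using y_carrier p_carrier by (simp add: m_assoc)
  then show ?thesis using y_mult_p y_carrier by simp
qed

lemma p_mult_x_pow: "k > 0 \<Longrightarrow> p \<otimes> x [^] (k::nat) = \<zero>"
proof -
  assume "k > 0"
  then obtain i where "k = Suc i" using gr0_implies_Suc by blast
  then have "p \<otimes> x [^] k = (p \<otimes> x) \<otimes> x [^] i"
    using nat_pow_Suc2[OF x_carrier] x_carrier p_carrier by (simp add: m_assoc)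
  then show ?thesis using p_mult_x x_carrier by simp
qed

lemma y_pow_x_pow_assoc:
  "w \<in> carrier R \<Longrightarrow> y [^] (j::nat) \<otimes> (x [^] (k::nat) \<otimes> w) = (if j \<le> k then x [^] (k - j) else y [^] (j - k)) \<otimes> w"
  using y_pow_mult_x_pow[of j k] x_carrier y_carrier by (simp add: m_assoc[symmetric])

lemma y_pow_p_assoc: "w \<in> carrier R \<Longrightarrow> j > 0 \<Longrightarrow> y [^] (j::nat) \<otimes> (p \<otimes> w) = \<zero>"
  using y_pow_mult_p[of j] y_carrier p_carrier by (simp add: m_assoc[symmetric])

lemma p_x_pow_assoc: "w \<in> carrier R \<Longrightarrow> k > 0 \<Longrightarrow> p \<otimes> (x [^] (k::nat) \<otimes> w) = \<zero>"
  using p_mult_x_pow[of k] x_carrier p_carrier by (simp add: m_assoc[symmetric])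

lemma p_idem_assoc: "w \<in> carrier R \<Longrightarrow> p \<otimes> (p \<otimes> w) = p \<otimes> w"
  using p_idem p_carrier by (simp add: m_assoc[symmetric])

lemma x_pow_x_pow_assoc: "w \<in> carrier R \<Longrightarrow> x [^] (i::nat) \<otimes> (x [^] (k::nat) \<otimes> w) = x [^] (i + k) \<otimes> w"
  using x_carrier by (simp add: m_assoc[symmetric] nat_pow_mult)

lemma y_pow_y_pow_assoc: "w \<in> carrier R \<Longrightarrow> y [^] (i::nat) \<otimes> (y [^] (k::nat) \<otimes> w) = y [^] (i + k) \<otimes> w"
  using y_carrier by (simp add: m_assoc[symmetric] nat_pow_mult)

lemma x_pow_lcomm: "b \<in> A \<Longrightarrow> w \<in> carrier R \<Longrightarrow> b \<otimes> (x [^] (n::nat) \<otimes> w) = x [^] n \<otimes> (b \<otimes> w)"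
  using x_pow_commutes[of b n] A_carrier x_carrier by (simp add: m_assoc[symmetric])

lemma y_pow_lcomm: "b \<in> A \<Longrightarrow> w \<in> carrier R \<Longrightarrow> b \<otimes> (y [^] (n::nat) \<otimes> w) = y [^] n \<otimes> (b \<otimes> w)"
  using y_pow_commutes[of b n] A_carrier y_carrier by (simp add: m_assoc[symmetric])

lemma p_lcomm: "b \<in> A \<Longrightarrow> w \<in> carrier R \<Longrightarrow> b \<otimes> (p \<otimes> w) = p \<otimes> (b \<otimes> w)"
  using p_commutes[of b] A_carrier p_carrier by (simp add: m_assoc[symmetric])

definition monomials :: "'a set" where
  "monomials = {x [^] (i::nat) \<otimes> (y [^] (j::nat) \<otimes> b) | i j b. b \<in> A}"

lemma monomials_carrier: "monomials \<subseteq> carrier R"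
  unfolding monomials_def using x_carrier y_carrier A_carrier by auto

lemma monomials_mult: "u \<in> monomials \<Longrightarrow> v \<in> monomials \<Longrightarrow> u \<otimes> v \<in> monomials"
proof -
  assume "u \<in> monomials" "v \<in> monomials"
  then obtain i j b k l b' where u: "u = x [^] (i::nat) \<otimes> (y [^] (j::nat) \<otimes> b)" "b \<in> A"
    and v: "v = x [^] (k::nat) \<otimes> (y [^] (l::nat) \<otimes> b')" "b' \<in> A" unfolding monomials_def by blast
  have uv: "u \<otimes> v = x [^] i \<otimes> (y [^] j \<otimes> (x [^] k \<otimes> (y [^] l \<otimes> (b \<otimes> b'))))"
    using u v x_carrier y_carrier A_carrier by (simp add: m_assoc x_pow_lcomm y_pow_lcomm)
  have bb': "b \<otimes> b' \<in> A" using u v subringE(6)[OF subring_A] by blast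
  show ?thesis
  proof (cases "j \<le> k")
    case True
    then have "u \<otimes> v = x [^] (i + (k - j)) \<otimes> (y [^] l \<otimes> (b \<otimes> b'))"
      using uv u v y_carrier A_carrier by (simp add: y_pow_x_pow_assoc x_pow_x_pow_assoc)
    then show ?thesis using bb' unfolding monomials_def by blast
  next
    case False
    then have "u \<otimes> v = x [^] i \<otimes> (y [^] (j - k + l) \<otimes> (b \<otimes> b'))"
      using uv u v y_carrier A_carrier by (simp add: y_pow_x_pow_assoc y_pow_y_pow_assoc)
    then show ?thesis using bb' unfolding monomials_def by blast
  qed
qed

lemma B_sub_add_span_monomials: "B \<subseteq> add_span R monomials"
proof -
  have "subring (add_span R monomials) R"
  proof (rule subringI)
    have "x [^] (0::nat) \<otimes> (y [^] (0::nat) \<otimes> \<one>) \<in> monomials"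
      unfolding monomials_def using subringE(3)[OF subring_A] by blast
    then show "\<one> \<in> add_span R monomials" by (simp add: add_span.incl)
    show "h1 \<otimes> h2 \<in> add_span R monomials" if "h1 \<in> add_span R monomials" "h2 \<in> add_span R monomials" for h1 h2
      by (rule add_span_mult[OF monomials_carrier monomials_carrier _ that])
        (auto intro: add_span.incl monomials_mult)
  qed (auto intro: add_span.add add_span.neg dest: add_span_carrier[OF _ monomials_carrier])
  moreover have "A \<union> {x, y} \<subseteq> monomials"
  proof -
    have "b = x [^] (0::nat) \<otimes> (y [^] (0::nat) \<otimes> b)" if "b \<in> A" for b using that A_carrier by simp
    moreover have "x = x [^] (1::nat) \<otimes> (y [^] (0::nat) \<otimes> \<one>)" using x_carrier by simp
    moreover have "y = x [^] (0::nat) \<otimes> (y [^] (1::nat) \<otimes> \<one>)" using y_carrier by simp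
    ultimately show ?thesis unfolding monomials_def using subringE(3)[OF subring_A] by blast
  qed
  ultimately show ?thesis
    unfolding B_generated using generate_ring_min_subring1 add_span.incl monomials_carrier
    by (metis (no_types, lifting) subset_iff)
qed

text \<open>The elements \<open>x [^] i \<otimes> p \<otimes> y [^] j\<close> multiply like matrix units; the terms below
  are their multiples by \<open>A\<close>, and they span the ideal generated by \<open>p\<close>.\<close>
definition unit_terms :: "'a set" where
  "unit_terms = {x [^] (i::nat) \<otimes> (p \<otimes> (b \<otimes> y [^] (j::nat))) | i j b. b \<in> A}"

definition p_ideal :: "'a set" where
  "p_ideal = add_span R unit_terms"

definition fin_ideal :: "'a set" where
  "fin_ideal = Z <+> p_ideal"

lemma unit_termsI: "b \<in> A \<Longrightarrow> x [^] (i::nat) \<otimes> (p \<otimes> (b \<otimes> y [^] (j::nat))) \<in> unit_terms"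
  unfolding unit_terms_def by blast

lemma unit_terms_sub_B: "unit_terms \<subseteq> B"
proof
  fix g assume "g \<in> unit_terms"
  then obtain i j b where "g = x [^] (i::nat) \<otimes> (p \<otimes> (b \<otimes> y [^] (j::nat)))" "b \<in> A"
    unfolding unit_terms_def by blast
  then show "g \<in> B" using A_sub_B by (auto intro!: subringE(6)[OF subring_B] x_pow_in_B p_in_B y_pow_in_B)
qed

lemma unit_terms_carrier: "unit_terms \<subseteq> carrier R"
  using unit_terms_sub_B B_carrier by blast

lemma p_ideal_carrier: "a \<in> p_ideal \<Longrightarrow> a \<in> carrier R"
  unfolding p_ideal_def using add_span_carrier[OF _ unit_terms_carrier] .

lemma monomial_mult_unit_term: "u \<in> monomials \<Longrightarrow> g \<in> unit_terms \<Longrightarrow> u \<otimes> g \<in> p_ideal"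
proof -
  assume "u \<in> monomials" "g \<in> unit_terms"
  then obtain i j b a c b' where u: "u = x [^] (i::nat) \<otimes> (y [^] (j::nat) \<otimes> b)" "b \<in> A"
    and g: "g = x [^] (a::nat) \<otimes> (p \<otimes> (b' \<otimes> y [^] (c::nat)))" "b' \<in> A"
    unfolding monomials_def unit_terms_def by blast
  have bb': "b \<otimes> b' \<in> A" using u g subringE(6)[OF subring_A] by blast
  have ug: "u \<otimes> g = x [^] i \<otimes> (y [^] j \<otimes> (x [^] a \<otimes> (p \<otimes> (b \<otimes> (b' \<otimes> y [^] c)))))"
    using u g x_carrier y_carrier p_carrier A_carrier by (simp add: m_assoc x_pow_lcomm p_lcomm)
  show ?thesis
  proof (cases "j \<le> a")
    case True
    then have "u \<otimes> g = x [^] (i + (a - j)) \<otimes> (p \<otimes> ((b \<otimes> b') \<otimes> y [^] c))"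
      using ug u g y_carrier p_carrier A_carrier by (simp add: y_pow_x_pow_assoc x_pow_x_pow_assoc m_assoc)
    then show ?thesis unfolding p_ideal_def using unit_termsI[OF bb'] add_span.incl by metis
  next
    case False
    then have "u \<otimes> g = \<zero>"
      using ug u g x_carrier y_carrier p_carrier A_carrier by (simp add: y_pow_x_pow_assoc y_pow_p_assoc)
    then show ?thesis unfolding p_ideal_def using add_span.zero by metis
  qed
qed

lemma unit_term_mult_monomial: "g \<in> unit_terms \<Longrightarrow> u \<in> monomials \<Longrightarrow> g \<otimes> u \<in> p_ideal"
proof -
  assume "u \<in> monomials" "g \<in> unit_terms"
  then obtain i j b a c b' where u: "u = x [^] (i::nat) \<otimes> (y [^] (j::nat) \<otimes> b)" "b \<in> A"
    and g: "g = x [^] (a::nat) \<otimes> (p \<otimes> (b' \<otimes> y [^] (c::nat)))" "b' \<in> A"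
    unfolding monomials_def unit_terms_def by blast
  have bb': "b' \<otimes> b \<in> A" using u g subringE(6)[OF subring_A] by blast
  have w: "y [^] j \<otimes> b \<in> carrier R" using u y_carrier A_carrier by simp
  have gu: "g \<otimes> u = x [^] a \<otimes> (p \<otimes> (b' \<otimes> (y [^] c \<otimes> (x [^] i \<otimes> (y [^] j \<otimes> b)))))"
    using u g x_carrier y_carrier p_carrier A_carrier by (simp add: m_assoc)
  consider "c = i" | "c < i" | "c > i" by linarith
  then show ?thesis
  proof cases
    case 1
    have "b' \<otimes> (y [^] j \<otimes> b) = (b' \<otimes> b) \<otimes> y [^] j"
      using y_pow_commutes[OF u(2)] A_carrier u g y_carrier by (simp add: m_assoc)
    then have "g \<otimes> u = x [^] a \<otimes> (p \<otimes> ((b' \<otimes> b) \<otimes> y [^] j))"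
      using gu y_pow_x_pow_assoc[OF w, of c i] 1 w by simp
    then show ?thesis unfolding p_ideal_def using unit_termsI[OF bb'] add_span.incl by metis
  next
    case 2
    then have "g \<otimes> u = x [^] a \<otimes> (p \<otimes> (x [^] (i - c) \<otimes> (b' \<otimes> (y [^] j \<otimes> b))))"
      using gu y_pow_x_pow_assoc[OF w, of c i] x_pow_lcomm[OF g(2) w] by simp
    also have "\<dots> = \<zero>" using p_x_pow_assoc w g A_carrier x_carrier 2 by simp
    finally show ?thesis unfolding p_ideal_def using add_span.zero by metis
  next
    case 3
    have "y [^] (c - i) \<otimes> (y [^] j \<otimes> b) = b \<otimes> y [^] (c - i + j)"
      using y_pow_y_pow_assoc[of b "c - i" j] y_pow_commutes[OF u(2)] A_carrier u by simp
    then have "g \<otimes> u = x [^] a \<otimes> (p \<otimes> ((b' \<otimes> b) \<otimes> y [^] (c - i + j)))"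
      using gu y_pow_x_pow_assoc[OF w, of c i] 3 A_carrier u g y_carrier by (simp add: m_assoc)
    then show ?thesis unfolding p_ideal_def using unit_termsI[OF bb'] add_span.incl by metis
  qed
qed

lemma ideal_in_p_ideal: "ideal_in R B p_ideal"
  unfolding ideal_in_def
proof (intro conjI ballI)
  show "p_ideal \<subseteq> B" unfolding p_ideal_def by (rule add_span_least[OF subring_B unit_terms_sub_B])
  show "\<zero> \<in> p_ideal" unfolding p_ideal_def by (rule add_span.zero)
next
  fix a b assume "a \<in> p_ideal" "b \<in> p_ideal"
  then show "a \<oplus> b \<in> p_ideal" unfolding p_ideal_def by (rule add_span.add)
next
  fix a assume "a \<in> p_ideal" then show "\<ominus> a \<in> p_ideal" unfolding p_ideal_def by (rule add_span.neg)
next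
  fix a b assume a: "a \<in> p_ideal" and "b \<in> B"
  then have b: "b \<in> add_span R monomials" using B_sub_add_span_monomials by blast
  show "a \<otimes> b \<in> p_ideal" "b \<otimes> a \<in> p_ideal"
    using add_span_mult[OF unit_terms_carrier monomials_carrier _ a[unfolded p_ideal_def] b]
      add_span_mult[OF monomials_carrier unit_terms_carrier _ b a[unfolded p_ideal_def]]
      unit_term_mult_monomial monomial_mult_unit_term
    unfolding p_ideal_def by blast+
qed

lemma ideal_in_fin_ideal: "ideal_in R B fin_ideal"
  unfolding fin_ideal_def by (rule ideal_in_set_add[OF subring_B ideal_Z ideal_in_p_ideal])

lemma Z_sub_fin_ideal: "Z \<subseteq> fin_ideal"
  unfolding fin_ideal_def using subset_set_add_left[OF ideal_in_p_ideal] Z_sub_B B_carrier by blast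

lemma p_in_fin_ideal: "p \<in> fin_ideal"
proof -
  have "x [^] (0::nat) \<otimes> (p \<otimes> (\<one> \<otimes> y [^] (0::nat))) \<in> unit_terms"
    by (rule unit_termsI[OF subringE(3)[OF subring_A]])
  then have "p \<in> p_ideal" unfolding p_ideal_def using p_carrier by (simp add: add_span.incl)
  then show ?thesis
    unfolding fin_ideal_def using subset_set_add_right[OF ideal_Z] p_ideal_carrier by blast
qed

lemma unit_term_annihilated:
  assumes g: "g = x [^] (a::nat) \<otimes> (p \<otimes> (b \<otimes> y [^] (c::nat)))" "b \<in> A" and n: "n > a" "n > c"
  shows "y [^] n \<otimes> g = \<zero>" and "g \<otimes> x [^] n = \<zero>"
proof -
  have b: "b \<in> carrier R" using g A_carrier by blast
  have w: "p \<otimes> (b \<otimes> y [^] c) \<in> carrier R" using b p_carrier y_carrier by simp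
  have "y [^] n \<otimes> g = y [^] (n - a) \<otimes> (p \<otimes> (b \<otimes> y [^] c))"
    unfolding g(1) using y_pow_x_pow_assoc[OF w, of n a] n by simp
  also have "\<dots> = \<zero>" using y_pow_p_assoc[of "b \<otimes> y [^] c" "n - a"] b y_carrier n by simp
  finally show "y [^] n \<otimes> g = \<zero>" .
  have "y [^] c \<otimes> x [^] n = x [^] (n - c)" using y_pow_mult_x_pow[of c n] n by simp
  moreover have "b \<otimes> x [^] (n - c) = x [^] (n - c) \<otimes> b" using x_pow_commutes[OF g(2)] by simp
  moreover have "p \<otimes> (x [^] (n - c) \<otimes> b) = \<zero>" using p_x_pow_assoc[OF b, of "n - c"] n by simp
  moreover have "g \<otimes> x [^] n = x [^] a \<otimes> (p \<otimes> (b \<otimes> (y [^] c \<otimes> x [^] n)))"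
    using g x_carrier y_carrier p_carrier b by (simp add: m_assoc)
  ultimately show "g \<otimes> x [^] n = \<zero>" using x_carrier by simp
qed

lemma p_ideal_annihilated:
  assumes "m \<in> p_ideal"
  shows "\<exists>N. \<forall>n::nat\<ge>N. y [^] n \<otimes> m = \<zero> \<and> m \<otimes> x [^] n = \<zero>"
  using assms unfolding p_ideal_def
proof (induction rule: add_span.induct)
  case (incl g)
  then obtain a b c where g: "g = x [^] (a::nat) \<otimes> (p \<otimes> (b \<otimes> y [^] (c::nat)))" "b \<in> A"
    unfolding unit_terms_def by blast
  show ?case
  proof (intro exI[of _ "Suc (max a c)"] allI impI)
    fix n assume "Suc (max a c) \<le> n"
    then show "y [^] n \<otimes> g = \<zero> \<and> g \<otimes> x [^] n = \<zero>" using unit_term_annihilated[OF g, of n] by simp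
  qed
next
  case zero then show ?case using x_carrier y_carrier by auto
next
  case (add m1 m2)
  then obtain N1 N2 where "\<forall>n::nat\<ge>N1. y [^] n \<otimes> m1 = \<zero> \<and> m1 \<otimes> x [^] n = \<zero>"
    "\<forall>n::nat\<ge>N2. y [^] n \<otimes> m2 = \<zero> \<and> m2 \<otimes> x [^] n = \<zero>" by blast
  moreover have "m1 \<in> carrier R" "m2 \<in> carrier R" using add.hyps p_ideal_carrier unfolding p_ideal_def by auto
  ultimately show ?case
    using x_carrier y_carrier by (intro exI[of _ "max N1 N2"]) (auto simp: r_distr l_distr)
next
  case (neg m)
  then obtain N where "\<forall>n::nat\<ge>N. y [^] n \<otimes> m = \<zero> \<and> m \<otimes> x [^] n = \<zero>" by blast
  moreover have "m \<in> carrier R" using neg.hyps p_ideal_carrier unfolding p_ideal_def by auto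
  ultimately show ?case using x_carrier y_carrier by (intro exI[of _ N]) (auto simp: r_minus l_minus)
qed

lemma fin_ideal_annihilated:
  assumes "f \<in> fin_ideal"
  obtains N :: nat where "y [^] N \<otimes> f \<in> Z" and "f \<otimes> x [^] N \<in> Z"
proof -
  obtain z m where f: "f = z \<oplus> m" "z \<in> Z" "m \<in> p_ideal"
    using assms unfolding fin_ideal_def by (auto simp: set_add_iff)
  obtain N where "\<forall>n::nat\<ge>N. y [^] n \<otimes> m = \<zero> \<and> m \<otimes> x [^] n = \<zero>"
    using p_ideal_annihilated[OF f(3)] by blast
  then have N: "y [^] N \<otimes> m = \<zero>" "m \<otimes> x [^] N = \<zero>" by auto
  have c: "z \<in> carrier R" "m \<in> carrier R" using f Z_sub_B B_carrier p_ideal_carrier by auto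
  have "y [^] N \<otimes> f = y [^] N \<otimes> z" "f \<otimes> x [^] N = z \<otimes> x [^] N"
    using f c N x_carrier y_carrier by (simp_all add: r_distr l_distr)
  then show ?thesis
    using that[of N] ideal_in_lmult[OF ideal_Z f(2) y_pow_in_B[of N]] ideal_in_rmult[OF ideal_Z f(2) x_pow_in_B[of N]]
    by simp
qed

text \<open>The diagonal idempotent \<open>x\<^sup>0 p y\<^sup>0 \<oplus> \<dots> \<oplus> x\<^sup>N\<^sup>-\<^sup>1 p y\<^sup>N\<^sup>-\<^sup>1\<close> of the first \<open>N\<close> matrix units.\<close>
primrec diag_sum :: "nat \<Rightarrow> 'a" where
  "diag_sum 0 = \<zero>"
| "diag_sum (Suc N) = diag_sum N \<oplus> x [^] N \<otimes> p \<otimes> y [^] N"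

lemma diag_sum_in_B: "diag_sum N \<in> B"
proof (induction N)
  case (Suc N)
  have "x [^] N \<otimes> p \<otimes> y [^] N \<in> B"
    using subringE(6)[OF subring_B subringE(6)[OF subring_B x_pow_in_B p_in_B] y_pow_in_B] .
  then show ?case using Suc subringE(7)[OF subring_B] by simp
qed (simp add: subringE(2)[OF subring_B])

lemma diag_sum_carrier: "diag_sum N \<in> carrier R"
  using diag_sum_in_B B_carrier by blast

lemma x_pow_y_pow_add_diag_sum: "x [^] N \<otimes> y [^] N \<oplus> diag_sum N = \<one>"
proof (induction N)
  case (Suc N)
  have xy_p: "x \<otimes> y \<oplus> p = \<one>" unfolding p_def using x_carrier y_carrier by (simp add: a_minus_def a_lcomm r_neg)
  have "y [^] Suc N = y \<otimes> y [^] N" using nat_pow_Suc2[OF y_carrier] .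
  then have "x [^] Suc N \<otimes> y [^] Suc N \<oplus> x [^] N \<otimes> p \<otimes> y [^] N = x [^] N \<otimes> (x \<otimes> y \<oplus> p) \<otimes> y [^] N"
    using x_carrier y_carrier p_carrier by (simp add: l_distr r_distr m_assoc)
  also have "\<dots> = x [^] N \<otimes> y [^] N" using xy_p x_carrier y_carrier by simp
  finally have "x [^] Suc N \<otimes> y [^] Suc N \<oplus> x [^] N \<otimes> p \<otimes> y [^] N = x [^] N \<otimes> y [^] N" .
  moreover have "x [^] Suc N \<otimes> y [^] Suc N \<oplus> diag_sum (Suc N)
      = (x [^] Suc N \<otimes> y [^] Suc N \<oplus> x [^] N \<otimes> p \<otimes> y [^] N) \<oplus> diag_sum N"
    using x_carrier y_carrier p_carrier diag_sum_carrier by (simp add: a_ac del: nat_pow_Suc)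
  ultimately show ?case using Suc by simp
qed simp

text \<open>An element that \<open>y [^] N\<close> kills from the left and \<open>x [^] N\<close> from the right (modulo \<open>Z\<close>)
  lives in the upper left \<open>N \<times> N\<close> corner.\<close>
lemma eq_mod_diag_sum_sandwich:
  assumes f: "f \<in> B" and "y [^] N \<otimes> f \<in> Z" and "f \<otimes> x [^] N \<in> Z"
  shows "eq_mod f (diag_sum N \<otimes> f \<otimes> diag_sum N)"
proof -
  have c: "f \<in> carrier R" using f B_carrier by blast
  note E = diag_sum_carrier[of N] and E_B = diag_sum_in_B[of N]
  have "f = (x [^] N \<otimes> y [^] N \<oplus> diag_sum N) \<otimes> f" using x_pow_y_pow_add_diag_sum c by simp
  also have "\<dots> = diag_sum N \<otimes> f \<oplus> x [^] N \<otimes> (y [^] N \<otimes> f)"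
    using c E x_carrier y_carrier by (simp add: l_distr m_assoc a_comm)
  finally have left: "diag_sum N \<otimes> f \<oplus> x [^] N \<otimes> (y [^] N \<otimes> f) = f" by simp
  have "diag_sum N \<otimes> f = diag_sum N \<otimes> f \<otimes> (x [^] N \<otimes> y [^] N \<oplus> diag_sum N)"
    using x_pow_y_pow_add_diag_sum c E by simp
  also have "\<dots> = diag_sum N \<otimes> f \<otimes> diag_sum N \<oplus> diag_sum N \<otimes> (f \<otimes> x [^] N) \<otimes> y [^] N"
    using c E x_carrier y_carrier by (simp add: r_distr m_assoc a_comm)
  finally have right: "diag_sum N \<otimes> f \<otimes> diag_sum N \<oplus> diag_sum N \<otimes> (f \<otimes> x [^] N) \<otimes> y [^] N
      = diag_sum N \<otimes> f" by simp
  have "eq_mod f (diag_sum N \<otimes> f)"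
    using eq_mod_add_Z[OF subringE(6)[OF subring_B E_B f] ideal_in_lmult[OF ideal_Z assms(2) x_pow_in_B[of N]]]
    unfolding left .
  moreover have "eq_mod (diag_sum N \<otimes> f) (diag_sum N \<otimes> f \<otimes> diag_sum N)"
    using eq_mod_add_Z[OF subringE(6)[OF subring_B subringE(6)[OF subring_B E_B f] E_B]
        ideal_in_rmult[OF ideal_Z ideal_in_lmult[OF ideal_Z assms(3) E_B] y_pow_in_B[of N]]]
    unfolding right .
  ultimately show ?thesis by (rule eq_mod_trans)
qed

lemma diag_sum_lmult_mem:
  "ideal_in R B I \<Longrightarrow> q \<in> B \<Longrightarrow> (\<And>a. a < N \<Longrightarrow> p \<otimes> y [^] a \<otimes> q \<in> I) \<Longrightarrow> diag_sum N \<otimes> q \<in> I"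
proof (induction N)
  case 0 then show ?case using B_carrier ideal_in_zero by simp
next
  case (Suc N)
  have "diag_sum (Suc N) \<otimes> q = diag_sum N \<otimes> q \<oplus> x [^] N \<otimes> (p \<otimes> y [^] N \<otimes> q)"
    using Suc.prems(2) B_carrier x_carrier y_carrier p_carrier diag_sum_carrier
    by (simp add: l_distr m_assoc del: nat_pow_Suc)
  then show ?case
    using ideal_in_add[OF Suc.prems(1) Suc.IH ideal_in_lmult[OF Suc.prems(1) _ x_pow_in_B]] Suc.prems by simp
qed

lemma diag_sum_rmult_mem:
  "ideal_in R B I \<Longrightarrow> q \<in> B \<Longrightarrow> (\<And>c. c < N \<Longrightarrow> q \<otimes> x [^] c \<otimes> p \<in> I) \<Longrightarrow> q \<otimes> diag_sum N \<in> I"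
proof (induction N)
  case 0 then show ?case using B_carrier ideal_in_zero by simp
next
  case (Suc N)
  have "q \<otimes> diag_sum (Suc N) = q \<otimes> diag_sum N \<oplus> (q \<otimes> x [^] N \<otimes> p) \<otimes> y [^] N"
    using Suc.prems(2) B_carrier x_carrier y_carrier p_carrier diag_sum_carrier
    by (simp add: r_distr m_assoc del: nat_pow_Suc)
  then show ?case
    using ideal_in_add[OF Suc.prems(1) Suc.IH ideal_in_rmult[OF Suc.prems(1) _ y_pow_in_B]] Suc.prems by simp
qed

lemma p_y_pow_x_pow_p:
  "w \<in> carrier R \<Longrightarrow> p \<otimes> (y [^] (a::nat) \<otimes> (x [^] (a'::nat) \<otimes> (p \<otimes> w))) = (if a = a' then p \<otimes> w else \<zero>)"
proof -
  assume w: "w \<in> carrier R"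
  then have pw: "p \<otimes> w \<in> carrier R" using p_carrier by simp
  consider "a = a'" | "a < a'" | "a > a'" by linarith
  then show ?thesis
  proof cases
    case 1 then show ?thesis using y_pow_x_pow_assoc[OF pw, of a a'] p_idem_assoc[OF w] pw by simp
  next
    case 2 then show ?thesis using y_pow_x_pow_assoc[OF pw, of a a'] p_x_pow_assoc[OF pw, of "a' - a"] by simp
  next
    case 3 then show ?thesis
      using y_pow_x_pow_assoc[OF pw, of a a'] y_pow_p_assoc[OF w, of "a - a'"] p_carrier by simp
  qed
qed

text \<open>The \<open>(a, c)\<close> entry of \<open>f\<close>, with respect to the matrix units \<open>x [^] i \<otimes> p \<otimes> y [^] j\<close>.\<close>
definition corner :: "nat \<Rightarrow> nat \<Rightarrow> 'a \<Rightarrow> 'a" where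
  "corner a c f = p \<otimes> (y [^] a \<otimes> (f \<otimes> (x [^] c \<otimes> p)))"

lemma corner_eq: "f \<in> carrier R \<Longrightarrow> corner a c f = p \<otimes> y [^] a \<otimes> f \<otimes> x [^] c \<otimes> p"
  unfolding corner_def using p_carrier x_carrier y_carrier by (simp add: m_assoc)

lemma corner_add: "f \<in> carrier R \<Longrightarrow> g \<in> carrier R \<Longrightarrow> corner a c (f \<oplus> g) = corner a c f \<oplus> corner a c g"
  unfolding corner_def using p_carrier x_carrier y_carrier by (simp add: l_distr r_distr)

lemma corner_neg: "f \<in> carrier R \<Longrightarrow> corner a c (\<ominus> f) = \<ominus> corner a c f"
  unfolding corner_def using p_carrier x_carrier y_carrier by (simp add: l_minus r_minus)

lemma corner_mem: "ideal_in R B I \<Longrightarrow> f \<in> I \<Longrightarrow> corner a c f \<in> I"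
  unfolding corner_def
  by (intro ideal_in_lmult[of R B I] ideal_in_rmult[of R B I] p_in_B y_pow_in_B x_pow_in_B
      subringE(6)[OF subring_B])

lemma corner_unit_term: "g \<in> unit_terms \<Longrightarrow> \<exists>b\<in>A. corner a c g = p \<otimes> b"
proof -
  assume "g \<in> unit_terms"
  then obtain a' b c' where g: "g = x [^] (a'::nat) \<otimes> (p \<otimes> (b \<otimes> y [^] (c'::nat)))" "b \<in> A"
    unfolding unit_terms_def by blast
  have b: "b \<in> carrier R" using g A_carrier by blast
  have w: "y [^] c' \<otimes> (x [^] c \<otimes> p) \<in> carrier R" using x_carrier y_carrier p_carrier by simp
  have "corner a c g = p \<otimes> (y [^] a \<otimes> (x [^] a' \<otimes> (p \<otimes> (b \<otimes> (y [^] c' \<otimes> (x [^] c \<otimes> p))))))"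
    unfolding corner_def g(1) using b x_carrier y_carrier p_carrier by (simp add: m_assoc)
  also have "\<dots> = (if a = a' then b \<otimes> (p \<otimes> (y [^] c' \<otimes> (x [^] c \<otimes> p))) else \<zero>)"
    using p_y_pow_x_pow_p[of "b \<otimes> (y [^] c' \<otimes> (x [^] c \<otimes> p))" a a'] p_lcomm[OF g(2) w] b w by simp
  also have "p \<otimes> (y [^] c' \<otimes> (x [^] c \<otimes> p)) = (if c' = c then p else \<zero>)"
    using p_y_pow_x_pow_p[of \<one> c' c] p_carrier by simp
  finally have "corner a c g = (if a = a' \<and> c' = c then b \<otimes> p else \<zero>)" using b by simp
  then show ?thesis
    using g(2) p_commutes[OF g(2)] subringE(2)[OF subring_A] p_carrier by (metis r_null)
qed

lemma corner_p_ideal: "m \<in> p_ideal \<Longrightarrow> \<exists>b\<in>A. corner a c m = p \<otimes> b"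
  unfolding p_ideal_def
proof (induction rule: add_span.induct)
  case (incl g) then show ?case by (rule corner_unit_term)
next
  case zero
  have "corner a c \<zero> = p \<otimes> \<zero>" unfolding corner_def using p_carrier x_carrier y_carrier by simp
  then show ?case using subringE(2)[OF subring_A] by blast
next
  case (add m1 m2)
  then obtain b1 b2 where b: "b1 \<in> A" "corner a c m1 = p \<otimes> b1" "b2 \<in> A" "corner a c m2 = p \<otimes> b2" by blast
  have "m1 \<in> carrier R" "m2 \<in> carrier R" using add.hyps p_ideal_carrier unfolding p_ideal_def by auto
  then have "corner a c (m1 \<oplus> m2) = p \<otimes> (b1 \<oplus> b2)"
    using corner_add b p_carrier A_carrier by (simp add: r_distr)
  then show ?case using subringE(7)[OF subring_A b(1,3)] by blast
next
  case (neg m)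
  then obtain b where b: "b \<in> A" "corner a c m = p \<otimes> b" by blast
  have "m \<in> carrier R" using neg.hyps p_ideal_carrier unfolding p_ideal_def by auto
  then have "corner a c (\<ominus> m) = p \<otimes> (\<ominus> b)" using corner_neg b p_carrier A_carrier by (simp add: r_minus)
  then show ?case using subringE(5)[OF subring_A b(1)] by blast
qed

lemma corner_fin_ideal: "f \<in> fin_ideal \<Longrightarrow> \<exists>b\<in>A. eq_mod (corner a c f) (p \<otimes> b)"
proof -
  assume "f \<in> fin_ideal"
  then obtain z m where f: "f = z \<oplus> m" "z \<in> Z" "m \<in> p_ideal" unfolding fin_ideal_def by (auto simp: set_add_iff)
  obtain b where b: "b \<in> A" "corner a c m = p \<otimes> b" using corner_p_ideal[OF f(3)] by blast
  have c: "z \<in> carrier R" "m \<in> carrier R" using f Z_sub_B B_carrier p_ideal_carrier by auto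
  have "corner a c f = p \<otimes> b \<oplus> corner a c z"
    unfolding f(1) corner_add[OF c] b(2) using c b p_carrier A_carrier x_carrier y_carrier
    by (simp add: a_comm corner_def)
  moreover have "p \<otimes> b \<in> B" using b A_sub_B p_in_B subringE(6)[OF subring_B] by blast
  ultimately have "eq_mod (corner a c f) (p \<otimes> b)"
    using eq_mod_add_Z corner_mem[OF ideal_Z f(2)] by simp
  then show ?thesis using b by blast
qed

definition p_contraction :: "'a set \<Rightarrow> 'a set" where
  "p_contraction I = {b \<in> A. p \<otimes> b \<in> I}"

lemma ideal_in_p_contraction:
  assumes I: "ideal_in R B I" shows "ideal_in R A (p_contraction I)"
  unfolding ideal_in_def
proof (intro conjI ballI)
  show "p_contraction I \<subseteq> A" unfolding p_contraction_def by blast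
  show "\<zero> \<in> p_contraction I"
    unfolding p_contraction_def using ideal_in_zero[OF I] p_carrier subringE(2)[OF subring_A] by auto
next
  fix a b assume "a \<in> p_contraction I" "b \<in> p_contraction I"
  then have a: "a \<in> A" "p \<otimes> a \<in> I" and b: "b \<in> A" "p \<otimes> b \<in> I" unfolding p_contraction_def by auto
  have "p \<otimes> (a \<oplus> b) = p \<otimes> a \<oplus> p \<otimes> b" using a b p_carrier A_carrier by (simp add: r_distr)
  then show "a \<oplus> b \<in> p_contraction I"
    unfolding p_contraction_def using a b ideal_in_add[OF I] subringE(7)[OF subring_A] by auto
next
  fix a assume "a \<in> p_contraction I"
  then have a: "a \<in> A" "p \<otimes> a \<in> I" unfolding p_contraction_def by auto
  have "p \<otimes> (\<ominus> a) = \<ominus> (p \<otimes> a)" using a p_carrier A_carrier by (simp add: r_minus)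
  then show "\<ominus> a \<in> p_contraction I"
    unfolding p_contraction_def using a ideal_in_neg[OF I] subringE(5)[OF subring_A] by auto
next
  fix a b assume "a \<in> p_contraction I" and b: "b \<in> A"
  then have a: "a \<in> A" "p \<otimes> a \<in> I" unfolding p_contraction_def by auto
  have "p \<otimes> (a \<otimes> b) = (p \<otimes> a) \<otimes> b" "p \<otimes> (b \<otimes> a) = b \<otimes> (p \<otimes> a)"
    using a b p_carrier A_carrier p_commutes[OF b] by (simp_all add: m_assoc[symmetric])
  then show "a \<otimes> b \<in> p_contraction I" "b \<otimes> a \<in> p_contraction I"
    unfolding p_contraction_def
    using a b A_sub_B ideal_in_rmult[OF I] ideal_in_lmult[OF I] subringE(6)[OF subring_A] by auto
qed

text \<open>An ideal between \<open>Z\<close> and \<open>fin_ideal\<close> is determined by its corners, and those are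
  recorded by the contraction: the sandwich by \<open>diag_sum N\<close> recovers \<open>f\<close> from its corners.\<close>
lemma subset_by_p_contraction:
  assumes I: "ideal_in R B I" and I': "ideal_in R B I'" and "Z \<subseteq> I" and "I \<subseteq> I'"
    and "I' \<subseteq> fin_ideal" and contr: "p_contraction I' \<subseteq> p_contraction I"
  shows "I' \<subseteq> I"
proof
  fix f assume f: "f \<in> I'"
  then have fF: "f \<in> fin_ideal" and fB: "f \<in> B" using assms(5) ideal_in_subset[OF I'] by auto
  have corners: "corner a c f \<in> I" for a c
  proof -
    obtain b where b: "b \<in> A" "eq_mod (corner a c f) (p \<otimes> b)" using corner_fin_ideal[OF fF] by blast
    have "p \<otimes> b \<in> I'"
      using eq_mod_mem_ideal[OF eq_mod_sym[OF b(2)] I'] corner_mem[OF I' f] assms(3,4) by blast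
    then have "p \<otimes> b \<in> I" using b(1) contr unfolding p_contraction_def by blast
    then show ?thesis using eq_mod_mem_ideal[OF b(2) I assms(3)] by blast
  qed
  obtain N :: nat where N: "y [^] N \<otimes> f \<in> Z" "f \<otimes> x [^] N \<in> Z" by (rule fin_ideal_annihilated[OF fF])
  have fc: "f \<in> carrier R" using fB B_carrier by blast
  have "diag_sum N \<otimes> (f \<otimes> diag_sum N) \<in> I"
  proof (rule diag_sum_lmult_mem[OF I subringE(6)[OF subring_B fB diag_sum_in_B]])
    fix a assume "a < N"
    have "(p \<otimes> y [^] a \<otimes> f) \<otimes> diag_sum N \<in> I"
    proof (rule diag_sum_rmult_mem[OF I])
      show "p \<otimes> y [^] a \<otimes> f \<in> B" using p_in_B y_pow_in_B fB subringE(6)[OF subring_B] by blast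
      show "p \<otimes> y [^] a \<otimes> f \<otimes> x [^] c \<otimes> p \<in> I" for c :: nat using corners[of a c] corner_eq[OF fc] by simp
    qed
    then show "p \<otimes> y [^] a \<otimes> (f \<otimes> diag_sum N) \<in> I"
      using p_carrier y_carrier fc diag_sum_carrier by (simp add: m_assoc)
  qed
  then have "diag_sum N \<otimes> f \<otimes> diag_sum N \<in> I" using fc diag_sum_carrier by (simp add: m_assoc)
  then show "f \<in> I" using eq_mod_mem_ideal[OF eq_mod_diag_sum_sandwich[OF fB N] I assms(3)] by blast
qed

lemma sum_and_contraction_stabilise:
  assumes acc_A: "acc_ideals_above R A (p_contraction Z)" and acc_F: "acc_ideals_above R B fin_ideal"
    and I: "\<And>m. ideal_in R B (I m)" and Z_sub: "\<And>m. Z \<subseteq> I m" and chain: "\<And>m. I m \<subseteq> I (Suc m)"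
  obtains K where "\<And>m. m \<ge> K \<Longrightarrow> I m <+> fin_ideal = I K <+> fin_ideal"
    and "\<And>m. m \<ge> K \<Longrightarrow> p_contraction (I m \<inter> fin_ideal) = p_contraction (I K \<inter> fin_ideal)"
proof -
  have "\<exists>N. \<forall>m\<ge>N. I m <+> fin_ideal = I N <+> fin_ideal"
  proof (rule acc_ideals_aboveD[OF acc_F])
    show "ideal_in R B (I m <+> fin_ideal)" for m
      by (rule ideal_in_set_add[OF subring_B I ideal_in_fin_ideal])
    show "fin_ideal \<subseteq> I m <+> fin_ideal" for m
      using subset_set_add_right[OF I] ideal_in_subset[OF ideal_in_fin_ideal] B_carrier by blast
    show "I m <+> fin_ideal \<subseteq> I (Suc m) <+> fin_ideal" for m by (rule set_add_mono_left[OF chain])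
  qed
  then obtain N1 where N1: "\<And>m. m \<ge> N1 \<Longrightarrow> I m <+> fin_ideal = I N1 <+> fin_ideal" by blast
  have "\<exists>N. \<forall>m\<ge>N. p_contraction (I m \<inter> fin_ideal) = p_contraction (I N \<inter> fin_ideal)"
  proof (rule acc_ideals_aboveD[OF acc_A])
    show "ideal_in R A (p_contraction (I m \<inter> fin_ideal))" for m
      by (rule ideal_in_p_contraction[OF ideal_in_Int[OF I ideal_in_fin_ideal]])
    show "p_contraction Z \<subseteq> p_contraction (I m \<inter> fin_ideal)" for m
      using Z_sub Z_sub_fin_ideal unfolding p_contraction_def by blast
    show "p_contraction (I m \<inter> fin_ideal) \<subseteq> p_contraction (I (Suc m) \<inter> fin_ideal)" for m
      using chain unfolding p_contraction_def by blast
  qed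
  then obtain N2 where N2: "\<And>m. m \<ge> N2 \<Longrightarrow> p_contraction (I m \<inter> fin_ideal) = p_contraction (I N2 \<inter> fin_ideal)"
    by blast
  show thesis
  proof (rule that)
    fix m assume "m \<ge> max N1 N2"
    then show "I m <+> fin_ideal = I (max N1 N2) <+> fin_ideal"
      and "p_contraction (I m \<inter> fin_ideal) = p_contraction (I (max N1 N2) \<inter> fin_ideal)"
      using N1[of m] N1[of "max N1 N2"] N2[of m] N2[of "max N1 N2"] by simp_all
  qed
qed

text \<open>A chain above \<open>Z\<close> is squeezed between its sums with \<open>fin_ideal\<close>, which stabilise in \<open>B\<close>,
  and its intersections with \<open>fin_ideal\<close>, whose contractions stabilise in \<open>A\<close>.\<close>
theorem acc_ideals_above_one_sided_inverse:
  assumes acc_A: "acc_ideals_above R A (p_contraction Z)" and acc_F: "acc_ideals_above R B fin_ideal"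
  shows "acc_ideals_above R B Z"
proof (rule acc_ideals_aboveI)
  fix I :: "nat \<Rightarrow> 'a set"
  assume I: "\<And>m. ideal_in R B (I m)" and Z_sub: "\<And>m. Z \<subseteq> I m" and chain: "\<And>m. I m \<subseteq> I (Suc m)"
  obtain K where sum: "\<And>m. m \<ge> K \<Longrightarrow> I m <+> fin_ideal = I K <+> fin_ideal"
    and contr: "\<And>m. m \<ge> K \<Longrightarrow> p_contraction (I m \<inter> fin_ideal) = p_contraction (I K \<inter> fin_ideal)"
    using sum_and_contraction_stabilise[OF acc_A acc_F, of I] I Z_sub chain by blast
  have "I m = I K" if m: "m \<ge> K" for m
  proof
    have mono: "I K \<subseteq> I m" using lift_Suc_mono_le[of I, OF chain m] .
    have "I m \<inter> fin_ideal \<subseteq> I K \<inter> fin_ideal"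
      using subset_by_p_contraction[OF ideal_in_Int[OF I ideal_in_fin_ideal] ideal_in_Int[OF I ideal_in_fin_ideal]]
        Z_sub Z_sub_fin_ideal mono contr[OF m] by blast
    then show "I m \<subseteq> I K"
      using ideal_in_subset_by_modular_law[OF subring_B I I ideal_in_fin_ideal mono] sum[OF m] by blast
  qed (rule lift_Suc_mono_le[of I, OF chain m])
  then show "\<exists>N. \<forall>m\<ge>N. I m = I N" by blast
qed

end

context ring
begin

lemma generate_ring_idem:
  assumes "H \<subseteq> carrier R" "K \<subseteq> carrier R"
  shows "generate_ring R (generate_ring R H \<union> K) = generate_ring R (H \<union> K)"
proof
  have sub: "subring (generate_ring R (H \<union> K)) R" using assms by (intro generate_ring_is_subring) auto
  have "generate_ring R H \<subseteq> generate_ring R (H \<union> K)" using assms by (intro mono_generate_ring) auto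
  moreover have "K \<subseteq> generate_ring R (H \<union> K)" by (auto intro: generate_ring.incl)
  ultimately have "generate_ring R H \<union> K \<subseteq> generate_ring R (H \<union> K)" by blast
  moreover have "generate_ring R H \<union> K \<subseteq> carrier R" using generate_ring_incl[OF assms(1)] assms(2) by blast
  ultimately show "generate_ring R (generate_ring R H \<union> K) \<subseteq> generate_ring R (H \<union> K)"
    by (intro generate_ring_min_subring1[OF _ sub])
  have "H \<union> K \<subseteq> generate_ring R H \<union> K" by (auto intro: generate_ring.incl)
  then show "generate_ring R (H \<union> K) \<subseteq> generate_ring R (generate_ring R H \<union> K)"
    using generate_ring_incl[OF assms(1)] assms(2) by (intro mono_generate_ring) auto
qed

lemma acc_ideals_above_adjoin_commuting:
  assumes Z: "ideal_in R B Z" and A: "subring A R" and B: "B = generate_ring R (A \<union> {t})"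
    and t: "t \<in> carrier R" and comm: "\<And>r. r \<in> A \<Longrightarrow> t \<otimes> r \<ominus> r \<otimes> t \<in> Z"
    and acc: "acc_ideals_above R A (Z \<inter> A)"
  shows "acc_ideals_above R B Z"
proof -
  have "subring B R" unfolding B using subringE(1)[OF A] t by (simp add: generate_ring_is_subring)
  then interpret commuting_extension R B Z A t
    by (intro commuting_extension.intro ideal_in_subring.intro ideal_in_subring_axioms.intro
        commuting_extension_axioms.intro ring_axioms Z A B t comm)
  show ?thesis by (rule acc_ideals_above_commuting_extension[OF acc])
qed

text \<open>Two Hilbert basis steps, \<open>A \<subseteq> A[x] \<subseteq> A[x][y] = B\<close>.\<close>
lemma acc_ideals_above_adjoin_commuting_pair:
  assumes Z: "ideal_in R B Z" and A: "subring A R" and B: "B = generate_ring R (A \<union> {x, y})"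
    and x: "x \<in> carrier R" and y: "y \<in> carrier R"
    and x_comm: "\<And>a. a \<in> A \<Longrightarrow> x \<otimes> a = a \<otimes> x" and y_comm: "\<And>a. a \<in> A \<Longrightarrow> y \<otimes> a = a \<otimes> y"
    and yx: "y \<otimes> x \<ominus> x \<otimes> y \<in> Z"
    and acc: "acc_ideals_above R A (Z \<inter> A)"
  shows "acc_ideals_above R B Z"
proof -
  define A' where "A' = generate_ring R (A \<union> {x})"
  have A_carrier: "A \<subseteq> carrier R" using subringE(1)[OF A] .
  have B': "B = generate_ring R (A' \<union> {y})"
    unfolding A'_def B using generate_ring_idem[of "A \<union> {x}" "{y}"] A_carrier x y by (simp add: insert_commute)
  have B_sub: "subring B R" and A'_sub: "subring A' R"
    unfolding B A'_def using A_carrier x y by (simp_all add: generate_ring_is_subring)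
  have A'B: "A' \<subseteq> B" unfolding B' by (auto intro: generate_ring.incl)
  have Z': "ideal_in R A' (Z \<inter> A')" by (rule ideal_in_restrict[OF Z A'_sub A'B])
  have self: "a \<ominus> a \<in> I" if "ideal_in R S I" "a \<in> carrier R" for S I a
    using ideal_in_zero[OF that(1)] that(2) by (simp add: a_minus_def r_neg)
  have "acc_ideals_above R A' (Z \<inter> A')"
  proof (rule acc_ideals_above_adjoin_commuting[OF Z' A A'_def x])
    show "x \<otimes> r \<ominus> r \<otimes> x \<in> Z \<inter> A'" if "r \<in> A" for r
      using x_comm[OF that] self[OF Z'] x A_carrier that by auto
    have "A \<subseteq> A'" unfolding A'_def by (auto intro: generate_ring.incl)
    then have "Z \<inter> A' \<inter> A = Z \<inter> A" by blast
    then show "acc_ideals_above R A (Z \<inter> A' \<inter> A)" using acc by simp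
  qed
  moreover have "y \<otimes> r \<ominus> r \<otimes> y \<in> Z" if "r \<in> A'" for r
  proof (rule generate_ring_commutes_mod[OF Z B_sub])
    show "A \<union> {x} \<subseteq> B" "y \<in> B" unfolding B by (auto intro: generate_ring.incl)
    show "y \<otimes> g \<ominus> g \<otimes> y \<in> Z" if "g \<in> A \<union> {x}" for g
      using that yx y_comm self[OF Z] A_carrier y by auto
  qed (use that A'_def in simp)
  ultimately show ?thesis using acc_ideals_above_adjoin_commuting[OF Z A'_sub B' y] by blast
qed

end

section \<open>Algebras generated by commuting one-sided inverse pairs over a field\<close>

locale one_sided_inverse_algebra = ring +
  fixes C :: "'a set" and Ix :: "nat set" and xs :: "nat \<Rightarrow> 'a" and ys :: "nat \<Rightarrow> 'a"
  assumes subring_C: "subring C R"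
    and C_central: "c \<in> C \<Longrightarrow> a \<in> carrier R \<Longrightarrow> c \<otimes> a = a \<otimes> c"
    and C_inverse: "c \<in> C \<Longrightarrow> c \<noteq> \<zero> \<Longrightarrow> \<exists>d\<in>C. d \<otimes> c = \<one>"
    and xs_carrier: "i \<in> Ix \<Longrightarrow> xs i \<in> carrier R"
    and ys_carrier: "i \<in> Ix \<Longrightarrow> ys i \<in> carrier R"
    and ys_xs: "i \<in> Ix \<Longrightarrow> ys i \<otimes> xs i = \<one>"
    and xs_xs: "i \<in> Ix \<Longrightarrow> j \<in> Ix \<Longrightarrow> i \<noteq> j \<Longrightarrow> xs i \<otimes> xs j = xs j \<otimes> xs i"
    and xs_ys: "i \<in> Ix \<Longrightarrow> j \<in> Ix \<Longrightarrow> i \<noteq> j \<Longrightarrow> xs i \<otimes> ys j = ys j \<otimes> xs i"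
    and ys_ys: "i \<in> Ix \<Longrightarrow> j \<in> Ix \<Longrightarrow> i \<noteq> j \<Longrightarrow> ys i \<otimes> ys j = ys j \<otimes> ys i"
begin

definition subalg :: "nat set \<Rightarrow> 'a set" where
  "subalg T = generate_ring R (C \<union> xs ` T \<union> ys ` T)"

lemma generators_carrier: "T \<subseteq> Ix \<Longrightarrow> C \<union> xs ` T \<union> ys ` T \<subseteq> carrier R"
  using subringE(1)[OF subring_C] xs_carrier ys_carrier by blast

lemma subring_subalg: "T \<subseteq> Ix \<Longrightarrow> subring (subalg T) R"
  unfolding subalg_def by (rule generate_ring_is_subring[OF generators_carrier])

lemma subalg_empty: "subalg {} = C"
proof
  show "subalg {} \<subseteq> C"
    unfolding subalg_def using subringE(1)[OF subring_C] by (intro generate_ring_min_subring1[OF _ subring_C]) auto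
  show "C \<subseteq> subalg {}" unfolding subalg_def by (auto intro: generate_ring.incl)
qed

lemma subalg_insert:
  assumes "insert i T \<subseteq> Ix"
  shows "subalg (insert i T) = generate_ring R (subalg T \<union> {xs i, ys i})"
proof -
  have "C \<union> xs ` insert i T \<union> ys ` insert i T = (C \<union> xs ` T \<union> ys ` T) \<union> {xs i, ys i}" by auto
  then have "subalg (insert i T) = generate_ring R ((C \<union> xs ` T \<union> ys ` T) \<union> {xs i, ys i})"
    unfolding subalg_def by simp
  also have "\<dots> = generate_ring R (subalg T \<union> {xs i, ys i})"
    unfolding subalg_def using assms xs_carrier ys_carrier
    by (intro generate_ring_idem[symmetric] generators_carrier) auto
  finally show ?thesis .
qed

lemma commutes_subalg:
  assumes i: "i \<in> Ix" and T: "T \<subseteq> Ix" "i \<notin> T" and b: "b \<in> subalg T"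
  shows "xs i \<otimes> b = b \<otimes> xs i" and "ys i \<otimes> b = b \<otimes> ys i"
proof -
  have ij: "j \<in> Ix" "i \<noteq> j" if "j \<in> T" for j using that T by auto
  have gen: "g \<in> C \<or> (\<exists>j\<in>T. g = xs j \<or> g = ys j)" if "g \<in> C \<union> xs ` T \<union> ys ` T" for g
    using that by blast
  show "xs i \<otimes> b = b \<otimes> xs i"
  proof (rule generate_ring_commutes[OF generators_carrier[OF T(1)] xs_carrier[OF i] _ b[unfolded subalg_def]])
    fix g assume "g \<in> C \<union> xs ` T \<union> ys ` T"
    then show "xs i \<otimes> g = g \<otimes> xs i"
      using gen C_central[OF _ xs_carrier[OF i]] xs_xs[OF i ij] xs_ys[OF i ij] by metis
  qed
  show "ys i \<otimes> b = b \<otimes> ys i"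
  proof (rule generate_ring_commutes[OF generators_carrier[OF T(1)] ys_carrier[OF i] _ b[unfolded subalg_def]])
    fix g assume "g \<in> C \<union> xs ` T \<union> ys ` T"
    then show "ys i \<otimes> g = g \<otimes> ys i"
      using gen C_central[OF _ ys_carrier[OF i]] xs_ys[OF ij(1) i] ij(2) ys_ys[OF i ij] by metis
  qed
qed

theorem acc_ideals_above_subalg:
  "finite T \<Longrightarrow> T \<subseteq> Ix \<Longrightarrow> ideal_in R (subalg T) Z \<Longrightarrow> acc_ideals_above R (subalg T) Z"
proof (induction T arbitrary: Z rule: finite_induct)
  case empty
  show ?case unfolding subalg_empty by (rule acc_ideals_above_division_subring[OF subring_C C_inverse])
next
  case (insert i T)
  have i: "i \<in> Ix" and T: "T \<subseteq> Ix" using insert.prems by auto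
  have gen: "subalg (insert i T) = generate_ring R (subalg T \<union> {xs i, ys i})"
    by (rule subalg_insert[OF insert.prems(1)])
  interpret N: one_sided_inverse_extension R "subalg (insert i T)" Z "subalg T" "xs i" "ys i"
  proof (intro one_sided_inverse_extension.intro ideal_in_subring.intro ideal_in_subring_axioms.intro
      one_sided_inverse_extension_axioms.intro)
    show "ring R" "subring (subalg (insert i T)) R" "ideal_in R (subalg (insert i T)) Z"
      "subring (subalg T) R" "xs i \<in> carrier R" "ys i \<in> carrier R" "ys i \<otimes> xs i = \<one>"
      by (fact ring_axioms subring_subalg[OF insert.prems(1)] insert.prems(2) subring_subalg[OF T]
          xs_carrier[OF i] ys_carrier[OF i] ys_xs[OF i])+
  qed (use gen commutes_subalg[OF i T insert.hyps(2)] in auto)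
  have "acc_ideals_above R (subalg T) (N.p_contraction Z)"
    by (rule insert.IH[OF T N.ideal_in_p_contraction[OF insert.prems(2)]])
  moreover have "acc_ideals_above R (subalg (insert i T)) N.fin_ideal"
  proof (rule acc_ideals_above_adjoin_commuting_pair[OF N.ideal_in_fin_ideal subring_subalg[OF T] gen
        xs_carrier[OF i] ys_carrier[OF i]])
    show "ys i \<otimes> xs i \<ominus> xs i \<otimes> ys i \<in> N.fin_ideal"
      using N.p_in_fin_ideal ys_xs[OF i] unfolding N.p_def by simp
    show "acc_ideals_above R (subalg T) (N.fin_ideal \<inter> subalg T)"
      by (rule insert.IH[OF T ideal_in_restrict[OF N.ideal_in_fin_ideal subring_subalg[OF T] N.A_sub_B]])
  qed (use commutes_subalg[OF i T insert.hyps(2)] in auto)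
  ultimately show ?case by (rule N.acc_ideals_above_one_sided_inverse)
qed

end

section \<open>The algebra \<open>S\<^sub>n\<close>\<close>

definition conv :: "(gen list \<Rightarrow> 'k::field) \<Rightarrow> (gen list \<Rightarrow> 'k) \<Rightarrow> gen list \<Rightarrow> 'k" where
  "conv f g w = (\<Sum>i\<le>length w. f (take i w) * g (drop i w))"

definition free_carrier :: "nat \<Rightarrow> (gen list \<Rightarrow> 'k::field) set" where
  "free_carrier n = {f. finite {w. f w \<noteq> 0} \<and> (\<forall>w. f w \<noteq> 0 \<longrightarrow> set w \<subseteq> gens n)}"

lemma free_alg_simps:
  "carrier (free_alg n) = free_carrier n"
  "mult (free_alg n) = conv"
  "one (free_alg n) = (\<lambda>w. if w = [] then 1 else 0)"
  "zero (free_alg n) = (\<lambda>w. 0)"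
  "add (free_alg n) = (\<lambda>f g w. f w + g w)"
  unfolding free_alg_def free_carrier_def conv_def[abs_def] by simp_all

lemma conv_assoc: "conv (conv f g) h = conv f (conv g h)"
proof
  fix w :: "gen list"
  define n where "n = length w"
  define G where "G j k = f (take j w) * g (take k (drop j w)) * h (drop (j + k) w)" for j k
  have "conv (conv f g) h w = (\<Sum>i\<le>n. (\<Sum>j\<le>i. f (take j (take i w)) * g (drop j (take i w))) * h (drop i w))"
    unfolding conv_def n_def by (intro sum.cong refl) (simp add: min_def)
  also have "\<dots> = (\<Sum>i\<le>n. \<Sum>j\<le>i. G j (i - j))"
    unfolding G_def by (intro sum.cong refl) (auto simp: sum_distrib_right min_def drop_take)
  also have "\<dots> = (\<Sum>(j, k)\<in>{(j, k). j + k \<le> n}. G j k)"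
    by (rule sum.triangle_reindex_eq[symmetric])
  also have "{(j, k). j + k \<le> n} = Sigma {..n} (\<lambda>j. {..n - j})" by auto
  also have "(\<Sum>(j, k)\<in>Sigma {..n} (\<lambda>j. {..n - j}). G j k) = (\<Sum>j\<le>n. \<Sum>k\<le>n - j. G j k)"
    by (rule sum.Sigma[symmetric]) auto
  also have "\<dots> = conv f (conv g h) w"
    unfolding conv_def n_def G_def by (intro sum.cong refl) (simp add: sum_distrib_left mult.assoc add.commute)
  finally show "conv (conv f g) h w = conv f (conv g h) w" .
qed

lemma conv_add_left: "conv (\<lambda>w. f w + g w) h = (\<lambda>w. conv f h w + conv g h w)"
  and conv_add_right: "conv h (\<lambda>w. f w + g w) = (\<lambda>w. conv h f w + conv h g w)"
  unfolding conv_def by (auto simp: ring_distribs sum.distrib)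

lemma conv_one_left: "conv (\<lambda>w. if w = [] then 1 else 0) f = f"
proof
  fix w :: "gen list"
  have "conv (\<lambda>w. if w = [] then 1 else 0) f w = (\<Sum>i\<le>length w. if i = 0 then f w else 0)"
    unfolding conv_def by (intro sum.cong refl) auto
  then show "conv (\<lambda>w. if w = [] then 1 else 0) f w = f w" by simp
qed

lemma conv_one_right: "conv f (\<lambda>w. if w = [] then 1 else 0) = f"
proof
  fix w :: "gen list"
  have "conv f (\<lambda>w. if w = [] then 1 else 0) w = (\<Sum>i\<le>length w. if i = length w then f w else 0)"
    unfolding conv_def by (intro sum.cong refl) auto
  then show "conv f (\<lambda>w. if w = [] then 1 else 0) w = f w" by simp
qed

lemma conv_nonzero:
  assumes "conv f g w \<noteq> 0" shows "\<exists>i\<le>length w. f (take i w) \<noteq> 0 \<and> g (drop i w) \<noteq> 0"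
proof (rule ccontr)
  assume "\<not> ?thesis"
  then have "conv f g w = 0" unfolding conv_def by (intro sum.neutral) auto
  then show False using assms by simp
qed

lemma conv_closed: "f \<in> free_carrier n \<Longrightarrow> g \<in> free_carrier n \<Longrightarrow> conv f g \<in> free_carrier n"
proof -
  assume f: "f \<in> free_carrier n" and g: "g \<in> free_carrier n"
  have "{w. conv f g w \<noteq> 0} \<subseteq> (\<lambda>(u, v). u @ v) ` ({w. f w \<noteq> 0} \<times> {w. g w \<noteq> 0})"
  proof
    fix w assume "w \<in> {w. conv f g w \<noteq> 0}"
    then obtain i where "f (take i w) \<noteq> 0" "g (drop i w) \<noteq> 0" using conv_nonzero by blast
    then show "w \<in> (\<lambda>(u, v). u @ v) ` ({w. f w \<noteq> 0} \<times> {w. g w \<noteq> 0})"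
      by (intro image_eqI[of _ _ "(take i w, drop i w)"]) auto
  qed
  moreover have "finite ((\<lambda>(u, v). u @ v) ` ({w. f w \<noteq> 0} \<times> {w. g w \<noteq> 0}))"
    using f g unfolding free_carrier_def by auto
  ultimately have "finite {w. conv f g w \<noteq> 0}" by (rule finite_subset)
  moreover have "set w \<subseteq> gens n" if nz: "conv f g w \<noteq> 0" for w
  proof -
    obtain i where "f (take i w) \<noteq> 0" "g (drop i w) \<noteq> 0" using conv_nonzero[OF nz] by blast
    then have "set (take i w) \<subseteq> gens n" "set (drop i w) \<subseteq> gens n" using f g unfolding free_carrier_def by auto
    then show ?thesis by (metis append_take_drop_id set_append Un_subset_iff)
  qed
  ultimately show ?thesis unfolding free_carrier_def by blast
qed

lemma free_carrier_add: "f \<in> free_carrier n \<Longrightarrow> g \<in> free_carrier n \<Longrightarrow> (\<lambda>w. f w + g w) \<in> free_carrier n"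
proof -
  assume f: "f \<in> free_carrier n" and g: "g \<in> free_carrier n"
  have "{w. f w + g w \<noteq> 0} \<subseteq> {w. f w \<noteq> 0} \<union> {w. g w \<noteq> 0}" by auto
  then have "finite {w. f w + g w \<noteq> 0}" using f g unfolding free_carrier_def by (auto intro: finite_subset)
  moreover have "set w \<subseteq> gens n" if "f w + g w \<noteq> 0" for w
  proof -
    have "f w \<noteq> 0 \<or> g w \<noteq> 0" using that by auto
    then show ?thesis using f g unfolding free_carrier_def by blast
  qed
  ultimately show ?thesis unfolding free_carrier_def by blast
qed

lemma free_carrier_uminus: "f \<in> free_carrier n \<Longrightarrow> (\<lambda>w. - f w) \<in> free_carrier n"
  unfolding free_carrier_def by simp

lemma ring_free_alg: "ring (free_alg n :: (gen list \<Rightarrow> 'k::field) ring)"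
proof (rule ringI)
  show "abelian_group (free_alg n :: (gen list \<Rightarrow> 'k) ring)"
  proof (rule abelian_groupI, simp_all only: free_alg_simps)
    fix f g :: "gen list \<Rightarrow> 'k" assume "f \<in> free_carrier n" "g \<in> free_carrier n"
    then show "(\<lambda>w. f w + g w) \<in> free_carrier n" by (rule free_carrier_add)
  next
    fix f :: "gen list \<Rightarrow> 'k" assume "f \<in> free_carrier n"
    then show "\<exists>g\<in>free_carrier n. (\<lambda>w. g w + f w) = (\<lambda>w. 0)"
      by (intro bexI[of _ "\<lambda>w. - f w"] free_carrier_uminus) auto
  qed (auto simp: add.assoc add.commute free_carrier_def)
  show "monoid (free_alg n :: (gen list \<Rightarrow> 'k) ring)"
  proof (rule monoidI, simp_all only: free_alg_simps)
    fix f g :: "gen list \<Rightarrow> 'k" assume "f \<in> free_carrier n" "g \<in> free_carrier n"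
    then show "conv f g \<in> free_carrier n" by (rule conv_closed)
  qed (auto simp: free_carrier_def conv_assoc conv_one_left conv_one_right)
qed (simp_all add: free_alg_simps conv_add_left conv_add_right)

lemma free_alg_a_inv:
  "f \<in> free_carrier n \<Longrightarrow> \<ominus>\<^bsub>(free_alg n :: (gen list \<Rightarrow> 'k::field) ring)\<^esub> f = (\<lambda>w. - f w)"
proof -
  assume f: "f \<in> free_carrier n"
  interpret ring "free_alg n :: (gen list \<Rightarrow> 'k) ring" by (rule ring_free_alg)
  show ?thesis by (rule minus_equality) (use f free_carrier_uminus in \<open>auto simp: free_alg_simps\<close>)
qed

lemma free_alg_minus: "f \<in> free_carrier n \<Longrightarrow> g \<in> free_carrier n \<Longrightarrow>
    f \<ominus>\<^bsub>(free_alg n :: (gen list \<Rightarrow> 'k::field) ring)\<^esub> g = (\<lambda>w. f w - g w)"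
  by (simp add: a_minus_def free_alg_a_inv free_alg_simps)

lemma mon_carrier: "set u \<subseteq> gens n \<Longrightarrow> mon u \<in> free_carrier n"
  unfolding free_carrier_def mon_def by auto

lemma conv_mon: "conv (mon u) (mon v) = (mon (u @ v) :: gen list \<Rightarrow> 'k::field)"
proof
  fix w :: "gen list"
  have split: "take i w = u \<and> drop i w = v \<longleftrightarrow> i = length u \<and> w = u @ v" if "i \<le> length w" for i
    using that by (auto simp: append_eq_conv_conj)
  have "conv (mon u) (mon v) w = (\<Sum>i\<le>length w. if i = length u \<and> w = u @ v then 1 else (0::'k))"
    unfolding conv_def mon_def using split by (intro sum.cong refl) auto
  also have "\<dots> = mon (u @ v) w" unfolding mon_def by auto
  finally show "conv (mon u) (mon v) w = (mon (u @ v) w :: 'k)" .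
qed

definition scalar :: "'k::field \<Rightarrow> gen list \<Rightarrow> 'k" where
  "scalar c w = (if w = [] then c else 0)"

lemma scalar_carrier: "scalar c \<in> free_carrier n"
  unfolding free_carrier_def scalar_def by simp

lemma conv_scalar_left: "conv (scalar c) f = (\<lambda>w. c * f w)"
proof
  fix w :: "gen list"
  have "conv (scalar c) f w = (\<Sum>i\<le>length w. if i = 0 then c * f w else 0)"
    unfolding conv_def scalar_def by (intro sum.cong refl) auto
  then show "conv (scalar c) f w = c * f w" by simp
qed

lemma conv_scalar_right: "conv f (scalar c) = (\<lambda>w. f w * c)"
proof
  fix w :: "gen list"
  have "conv f (scalar c) w = (\<Sum>i\<le>length w. if i = length w then f w * c else 0)"
    unfolding conv_def scalar_def by (intro sum.cong refl) auto
  then show "conv f (scalar c) w = f w * c" by simp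
qed

lemma scalar_one: "scalar 1 = (\<lambda>w. if w = [] then 1 else 0)"
  and scalar_zero: "scalar 0 = (\<lambda>w. 0)"
  and mon_Nil: "mon [] = scalar 1"
  by (auto simp: scalar_def mon_def)

definition rel_ideal :: "nat \<Rightarrow> (gen list \<Rightarrow> 'k::field) set" where
  "rel_ideal n = genideal (free_alg n) (rels n)"

definition quot :: "nat \<Rightarrow> (gen list \<Rightarrow> 'k::field) \<Rightarrow> (gen list \<Rightarrow> 'k) set" where
  "quot n = a_r_coset (free_alg n) (rel_ideal n)"

lemma rels_carrier: "rels n \<subseteq> (free_carrier n :: (gen list \<Rightarrow> 'k::field) set)"
proof -
  have "(\<lambda>w. mon u w - mon v w) \<in> (free_carrier n :: (gen list \<Rightarrow> 'k) set)"
    if "set u \<subseteq> gens n" "set v \<subseteq> gens n" for u v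
    using free_carrier_add[OF mon_carrier[OF that(1)] free_carrier_uminus[OF mon_carrier[OF that(2)]]]
    by simp
  then show ?thesis unfolding rels_def by (auto simp: gens_def)
qed

lemma ideal_rel_ideal: "ideal (rel_ideal n :: (gen list \<Rightarrow> 'k::field) set) (free_alg n)"
  unfolding rel_ideal_def by (rule ring.genideal_ideal[OF ring_free_alg]) (simp add: free_alg_simps rels_carrier)

lemma rels_sub_rel_ideal: "rels n \<subseteq> (rel_ideal n :: (gen list \<Rightarrow> 'k::field) set)"
  unfolding rel_ideal_def by (rule ring.genideal_self[OF ring_free_alg]) (simp add: free_alg_simps rels_carrier)

lemma S_alg_eq: "S_alg n = free_alg n Quot (rel_ideal n :: (gen list \<Rightarrow> 'k::field) set)"
  unfolding S_alg_def rel_ideal_def ..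

lemma ring_hom_ring_quot: "ring_hom_ring (free_alg n) (S_alg n) (quot n :: (gen list \<Rightarrow> 'k::field) \<Rightarrow> _)"
  unfolding S_alg_eq quot_def using ideal.rcos_ring_hom_ring[OF ideal_rel_ideal] .

lemma ring_S_alg: "ring (S_alg n :: (gen list \<Rightarrow> 'k::field) set ring)"
  unfolding S_alg_eq using ideal.quotient_is_ring[OF ideal_rel_ideal] .

lemma carrier_S_alg: "carrier (S_alg n :: (gen list \<Rightarrow> 'k::field) set ring) = quot n ` free_carrier n"
  unfolding S_alg_eq quot_def FactRing_def A_RCOSETS_def' by (auto simp: free_alg_simps)

lemma
  fixes f g :: "gen list \<Rightarrow> 'k::field"
  assumes "f \<in> free_carrier n" "g \<in> free_carrier n"
  shows quot_add: "quot n (\<lambda>w. f w + g w) = quot n f \<oplus>\<^bsub>S_alg n\<^esub> quot n g"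
    and quot_mult: "quot n (conv f g) = quot n f \<otimes>\<^bsub>S_alg n\<^esub> quot n g"
proof -
  interpret ring_hom_ring "free_alg n :: (gen list \<Rightarrow> 'k) ring" "S_alg n" "quot n" by (rule ring_hom_ring_quot)
  show "quot n (\<lambda>w. f w + g w) = quot n f \<oplus>\<^bsub>S_alg n\<^esub> quot n g"
    "quot n (conv f g) = quot n f \<otimes>\<^bsub>S_alg n\<^esub> quot n g"
    using hom_add[of f g] hom_mult[of f g] assms by (simp_all add: free_alg_simps)
qed

lemma quot_uminus:
  "f \<in> free_carrier n \<Longrightarrow> quot n (\<lambda>w. - f w) = \<ominus>\<^bsub>S_alg n\<^esub> quot n (f :: gen list \<Rightarrow> 'k::field)"
proof -
  interpret ring_hom_ring "free_alg n :: (gen list \<Rightarrow> 'k) ring" "S_alg n" "quot n" by (rule ring_hom_ring_quot)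
  show "f \<in> free_carrier n \<Longrightarrow> ?thesis" using hom_a_inv[of f] free_alg_a_inv[of f n] by (simp add: free_alg_simps)
qed

lemma quot_scalar_one: "quot n (scalar 1 :: gen list \<Rightarrow> 'k::field) = \<one>\<^bsub>S_alg n\<^esub>"
  and quot_scalar_zero: "quot n (scalar 0 :: gen list \<Rightarrow> 'k::field) = \<zero>\<^bsub>S_alg n\<^esub>"
proof -
  interpret ring_hom_ring "free_alg n :: (gen list \<Rightarrow> 'k) ring" "S_alg n" "quot n" by (rule ring_hom_ring_quot)
  show "quot n (scalar 1 :: gen list \<Rightarrow> 'k::field) = \<one>\<^bsub>S_alg n\<^esub>"
    "quot n (scalar 0 :: gen list \<Rightarrow> 'k::field) = \<zero>\<^bsub>S_alg n\<^esub>"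
    using hom_one hom_zero by (simp_all add: free_alg_simps scalar_one scalar_zero)
qed

lemma quot_mon_rel:
  assumes "(\<lambda>w. mon u w - mon v w :: 'k::field) \<in> rels n" and "set u \<subseteq> gens n" "set v \<subseteq> gens n"
  shows "quot n (mon u :: gen list \<Rightarrow> 'k) = quot n (mon v)"
proof -
  interpret ideal "rel_ideal n :: (gen list \<Rightarrow> 'k) set" "free_alg n" by (rule ideal_rel_ideal)
  have c: "(mon u :: gen list \<Rightarrow> 'k) \<in> free_carrier n" "(mon v :: gen list \<Rightarrow> 'k) \<in> free_carrier n"
    using assms(2,3) by (auto intro: mon_carrier)
  moreover have "(mon u :: gen list \<Rightarrow> 'k) \<ominus>\<^bsub>free_alg n\<^esub> mon v = (\<lambda>w. mon u w - mon v w)"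
    by (rule free_alg_minus[OF c])
  moreover have "(\<lambda>w. mon u w - mon v w :: 'k) \<in> rel_ideal n"
    using rels_sub_rel_ideal[of n] assms(1) by blast
  ultimately have "(mon u :: gen list \<Rightarrow> 'k) \<ominus>\<^bsub>free_alg n\<^esub> mon v \<in> rel_ideal n" by simp
  then have "(mon u :: gen list \<Rightarrow> 'k) \<in> rel_ideal n +>\<^bsub>free_alg n\<^esub> mon v"
    using a_rcos_module_minus[OF ring_free_alg] c by (simp add: free_alg_simps)
  then show ?thesis
    unfolding quot_def using a_repr_independence' c by (simp add: free_alg_simps)
qed

definition scalars :: "nat \<Rightarrow> (gen list \<Rightarrow> 'k::field) set set" where
  "scalars n = quot n ` range scalar"

definition gen_x :: "nat \<Rightarrow> nat \<Rightarrow> (gen list \<Rightarrow> 'k::field) set" where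
  "gen_x n i = quot n (mon [X i])"

definition gen_y :: "nat \<Rightarrow> nat \<Rightarrow> (gen list \<Rightarrow> 'k::field) set" where
  "gen_y n i = quot n (mon [Y i])"

lemma gens_XY: "i \<in> {1..n} \<Longrightarrow> set [X i] \<subseteq> gens n" "i \<in> {1..n} \<Longrightarrow> set [Y i] \<subseteq> gens n"
  by (auto simp: gens_def)

lemma quot_mon_mult:
  "set u \<subseteq> gens n \<Longrightarrow> set v \<subseteq> gens n \<Longrightarrow>
    quot n (mon u :: gen list \<Rightarrow> 'k::field) \<otimes>\<^bsub>S_alg n\<^esub> quot n (mon v) = quot n (mon (u @ v))"
  by (simp add: quot_mult[symmetric] mon_carrier conv_mon)

lemma subring_scalars: "subring (scalars n :: (gen list \<Rightarrow> 'k::field) set set) (S_alg n)"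
proof (rule ring.subringI[OF ring_S_alg])
  show "scalars n \<subseteq> carrier (S_alg n)" unfolding scalars_def carrier_S_alg using scalar_carrier by blast
  show "\<one>\<^bsub>S_alg n\<^esub> \<in> (scalars n :: (gen list \<Rightarrow> 'k) set set)"
    unfolding scalars_def using quot_scalar_one by (metis rangeI image_eqI)
next
  fix a b :: "(gen list \<Rightarrow> 'k) set" assume "a \<in> scalars n" "b \<in> scalars n"
  then obtain c d where a: "a = quot n (scalar c)" and b: "b = quot n (scalar d)" unfolding scalars_def by blast
  have "a \<oplus>\<^bsub>S_alg n\<^esub> b = quot n (scalar (c + d))"
    unfolding a b quot_add[OF scalar_carrier scalar_carrier, symmetric]
    by (intro arg_cong[where f = "quot n"]) (auto simp: scalar_def)
  moreover have "a \<otimes>\<^bsub>S_alg n\<^esub> b = quot n (scalar (c * d))"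
    unfolding a b quot_mult[OF scalar_carrier scalar_carrier, symmetric] conv_scalar_left
    by (intro arg_cong[where f = "quot n"]) (auto simp: scalar_def)
  ultimately show "a \<oplus>\<^bsub>S_alg n\<^esub> b \<in> scalars n" "a \<otimes>\<^bsub>S_alg n\<^esub> b \<in> scalars n"
    unfolding scalars_def by simp_all
next
  fix a :: "(gen list \<Rightarrow> 'k) set" assume "a \<in> scalars n"
  then obtain c where a: "a = quot n (scalar c)" unfolding scalars_def by blast
  have "\<ominus>\<^bsub>S_alg n\<^esub> a = quot n (scalar (- c))"
    unfolding a quot_uminus[OF scalar_carrier, symmetric]
    by (intro arg_cong[where f = "quot n"]) (auto simp: scalar_def)
  then show "\<ominus>\<^bsub>S_alg n\<^esub> a \<in> scalars n" unfolding scalars_def by simp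
qed

lemma scalars_central:
  "c \<in> scalars n \<Longrightarrow> a \<in> carrier (S_alg n) \<Longrightarrow> c \<otimes>\<^bsub>S_alg n\<^esub> a = a \<otimes>\<^bsub>S_alg n\<^esub> (c :: (gen list \<Rightarrow> 'k::field) set)"
proof -
  assume "c \<in> scalars n" "a \<in> carrier (S_alg n)"
  then obtain c' f where c: "c = quot n (scalar c')" and f: "f \<in> free_carrier n" "a = quot n f"
    unfolding scalars_def carrier_S_alg by blast
  have "conv (scalar c') f = conv f (scalar c')" by (simp add: conv_scalar_left conv_scalar_right mult.commute)
  then show ?thesis unfolding c f(2) quot_mult[OF scalar_carrier f(1), symmetric] quot_mult[OF f(1) scalar_carrier, symmetric]
    by simp
qed

lemma scalars_inverse:
  "c \<in> scalars n \<Longrightarrow> c \<noteq> \<zero>\<^bsub>S_alg n\<^esub> \<Longrightarrow> \<exists>d\<in>scalars n. d \<otimes>\<^bsub>S_alg n\<^esub> c = (\<one>\<^bsub>S_alg n\<^esub> :: (gen list \<Rightarrow> 'k::field) set)"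
proof -
  assume "c \<in> scalars n" and nz: "c \<noteq> \<zero>\<^bsub>S_alg n\<^esub>"
  then obtain c' where c: "c = quot n (scalar c')" unfolding scalars_def by blast
  then have "c' \<noteq> 0" using nz quot_scalar_zero by auto
  have "quot n (scalar (inverse c')) \<otimes>\<^bsub>S_alg n\<^esub> c = quot n (scalar (inverse c' * c'))"
    unfolding c quot_mult[OF scalar_carrier scalar_carrier, symmetric] conv_scalar_left
    by (intro arg_cong[where f = "quot n"]) (auto simp: scalar_def)
  then show ?thesis using \<open>c' \<noteq> 0\<close> quot_scalar_one unfolding scalars_def by auto
qed

lemma gen_x_carrier: "i \<in> {1..n} \<Longrightarrow> gen_x n i \<in> carrier (S_alg n :: (gen list \<Rightarrow> 'k::field) set ring)"
  and gen_y_carrier: "i \<in> {1..n} \<Longrightarrow> gen_y n i \<in> carrier (S_alg n :: (gen list \<Rightarrow> 'k::field) set ring)"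
  unfolding gen_x_def gen_y_def carrier_S_alg using mon_carrier gens_XY by blast+

lemma gen_y_mult_gen_x:
  assumes "i \<in> {1..n}"
  shows "gen_y n i \<otimes>\<^bsub>S_alg n\<^esub> gen_x n i = (\<one>\<^bsub>S_alg n\<^esub> :: (gen list \<Rightarrow> 'k::field) set)"
proof -
  have "gen_y n i \<otimes>\<^bsub>S_alg n\<^esub> gen_x n i = (quot n (mon []) :: (gen list \<Rightarrow> 'k) set)"
    unfolding gen_x_def gen_y_def quot_mon_mult[OF gens_XY(2)[OF assms] gens_XY(1)[OF assms]]
    by (rule quot_mon_rel) (use assms in \<open>auto simp: rels_def gens_def\<close>)
  then show ?thesis by (simp add: mon_Nil quot_scalar_one)
qed

lemma
  assumes i: "i \<in> {1..n}" and j: "j \<in> {1..n}" and "i \<noteq> j"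
  shows gen_x_commute:
      "gen_x n i \<otimes>\<^bsub>S_alg n\<^esub> gen_x n j = (gen_x n j \<otimes>\<^bsub>S_alg n\<^esub> gen_x n i :: (gen list \<Rightarrow> 'k::field) set)"
    and gen_x_gen_y_commute:
      "gen_x n i \<otimes>\<^bsub>S_alg n\<^esub> gen_y n j = (gen_y n j \<otimes>\<^bsub>S_alg n\<^esub> gen_x n i :: (gen list \<Rightarrow> 'k::field) set)"
    and gen_y_commute:
      "gen_y n i \<otimes>\<^bsub>S_alg n\<^esub> gen_y n j = (gen_y n j \<otimes>\<^bsub>S_alg n\<^esub> gen_y n i :: (gen list \<Rightarrow> 'k::field) set)"
proof -
  note XY = gens_XY[OF i] gens_XY[OF j]
  show "gen_x n i \<otimes>\<^bsub>S_alg n\<^esub> gen_x n j = (gen_x n j \<otimes>\<^bsub>S_alg n\<^esub> gen_x n i :: (gen list \<Rightarrow> 'k) set)"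
    unfolding gen_x_def quot_mon_mult[OF XY(1,3)] quot_mon_mult[OF XY(3,1)]
    by (rule quot_mon_rel) (use i j assms(3) in \<open>auto simp: rels_def gens_def\<close>)
  show "gen_x n i \<otimes>\<^bsub>S_alg n\<^esub> gen_y n j = (gen_y n j \<otimes>\<^bsub>S_alg n\<^esub> gen_x n i :: (gen list \<Rightarrow> 'k) set)"
    unfolding gen_x_def gen_y_def quot_mon_mult[OF XY(1,4)] quot_mon_mult[OF XY(4,1)]
    by (rule quot_mon_rel) (use i j assms(3) in \<open>auto simp: rels_def gens_def\<close>)
  show "gen_y n i \<otimes>\<^bsub>S_alg n\<^esub> gen_y n j = (gen_y n j \<otimes>\<^bsub>S_alg n\<^esub> gen_y n i :: (gen list \<Rightarrow> 'k) set)"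
    unfolding gen_y_def quot_mon_mult[OF XY(2,4)] quot_mon_mult[OF XY(4,2)]
    by (rule quot_mon_rel) (use i j assms(3) in \<open>auto simp: rels_def gens_def\<close>)
qed

lemma one_sided_inverse_algebra_S_alg:
  "one_sided_inverse_algebra (S_alg n :: (gen list \<Rightarrow> 'k::field) set ring) (scalars n) {1..n} (gen_x n) (gen_y n)"
  by (intro one_sided_inverse_algebra.intro ring_S_alg one_sided_inverse_algebra_axioms.intro
      subring_scalars scalars_central scalars_inverse gen_x_carrier gen_y_carrier gen_y_mult_gen_x
      gen_x_commute gen_x_gen_y_commute gen_y_commute)

lemma quot_mon_generated:
  "set u \<subseteq> gens n \<Longrightarrow> quot n (mon u :: gen list \<Rightarrow> 'k::field)
     \<in> generate_ring (S_alg n) (scalars n \<union> gen_x n ` {1..n} \<union> gen_y n ` {1..n})"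
proof (induction u)
  case Nil
  then show ?case using generate_ring.one by (metis mon_Nil quot_scalar_one)
next
  case (Cons g u)
  then have g: "set [g] \<subseteq> gens n" and u: "set u \<subseteq> gens n" by auto
  then obtain i where "i \<in> {1..n}" "g = X i \<or> g = Y i" unfolding gens_def by auto
  then have "quot n (mon [g] :: gen list \<Rightarrow> 'k)
      \<in> generate_ring (S_alg n) (scalars n \<union> gen_x n ` {1..n} \<union> gen_y n ` {1..n})"
    unfolding gen_x_def gen_y_def by (auto intro: generate_ring.incl)
  moreover have "quot n (mon (g # u) :: gen list \<Rightarrow> 'k) = quot n (mon [g]) \<otimes>\<^bsub>S_alg n\<^esub> quot n (mon u)"
    using quot_mon_mult[OF g u, where 'k = 'k] by simp
  ultimately show ?case using generate_ring.eng_mult[OF _ Cons.IH[OF u]] by simp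
qed

lemma quot_generated:
  "f \<in> free_carrier n \<Longrightarrow> quot n (f :: gen list \<Rightarrow> 'k::field)
     \<in> generate_ring (S_alg n) (scalars n \<union> gen_x n ` {1..n} \<union> gen_y n ` {1..n})"
proof (induction "card {w. f w \<noteq> 0}" arbitrary: f rule: less_induct)
  case less
  show ?case
  proof (cases "\<exists>w. f w \<noteq> 0")
    case False
    then have "f = scalar 0" by (auto simp: scalar_def)
    then show ?thesis using ring.zero_in_generate[OF ring_S_alg] quot_scalar_zero by metis
  next
    case True
    then obtain w where w: "f w \<noteq> 0" by blast
    have fin: "finite {w. f w \<noteq> 0}" and sw: "set w \<subseteq> gens n"
      using less.prems w unfolding free_carrier_def by auto
    define f' where "f' = f(w := 0)"
    have f': "f' \<in> free_carrier n"
      using less.prems unfolding free_carrier_def f'_def by (auto intro: finite_subset[OF _ fin])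
    have "{v. f' v \<noteq> 0} = {v. f v \<noteq> 0} - {w}" unfolding f'_def by auto
    then have "card {v. f' v \<noteq> 0} < card {v. f v \<noteq> 0}" using card_Diff1_less[OF fin, of w] w by simp
    then have IH: "quot n f' \<in> generate_ring (S_alg n) (scalars n \<union> gen_x n ` {1..n} \<union> gen_y n ` {1..n})"
      using less.hyps f' by blast
    have f_eq: "(\<lambda>v. conv (scalar (f w)) (mon w) v + f' v) = f"
      unfolding conv_scalar_left f'_def mon_def by auto
    have "quot n (\<lambda>v. conv (scalar (f w)) (mon w) v + f' v)
        = quot n (conv (scalar (f w)) (mon w)) \<oplus>\<^bsub>S_alg n\<^esub> quot n f'"
      by (rule quot_add[OF conv_closed[OF scalar_carrier mon_carrier[OF sw]] f'])
    then have "quot n f = quot n (scalar (f w)) \<otimes>\<^bsub>S_alg n\<^esub> quot n (mon w) \<oplus>\<^bsub>S_alg n\<^esub> quot n f'"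
      unfolding f_eq quot_mult[OF scalar_carrier mon_carrier[OF sw]] .
    moreover have "quot n (scalar (f w)) \<in> scalars n" unfolding scalars_def by simp
    ultimately show ?thesis
      using IH quot_mon_generated[OF sw, where 'k = 'k]
      by (auto intro: generate_ring.eng_add generate_ring.eng_mult generate_ring.incl)
  qed
qed

lemma S_alg_generated:
  "carrier (S_alg n :: (gen list \<Rightarrow> 'k::field) set ring)
     = generate_ring (S_alg n) (scalars n \<union> gen_x n ` {1..n} \<union> gen_y n ` {1..n})"
proof
  let ?G = "scalars n \<union> gen_x n ` {1..n} \<union> gen_y n ` {1..n} :: (gen list \<Rightarrow> 'k) set set"
  show "carrier (S_alg n) \<subseteq> generate_ring (S_alg n) ?G"
    unfolding carrier_S_alg using quot_generated by blast
  have "?G \<subseteq> carrier (S_alg n)"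
    using subringE(1)[OF subring_scalars] gen_x_carrier gen_y_carrier by blast
  then show "generate_ring (S_alg n) ?G \<subseteq> carrier (S_alg n)"
    by (rule ring.generate_ring_incl[OF ring_S_alg])
qed

theorem theorem2p7:
  fixes n :: nat and I :: "nat \<Rightarrow> (gen list \<Rightarrow> 'k::field) set set"
  assumes "n \<ge> 1"
    and "\<And>m. ideal (I m) (S_alg n :: (gen list \<Rightarrow> 'k) set ring)"
    and "\<And>m. I m \<subseteq> I (Suc m)"
  shows "\<exists>N. \<forall>m\<ge>N. I m = I N"
proof -
  interpret S: one_sided_inverse_algebra "S_alg n :: (gen list \<Rightarrow> 'k) set ring" "scalars n" "{1..n}" "gen_x n" "gen_y n"
    by (rule one_sided_inverse_algebra_S_alg)
  have carrier: "S.subalg {1..n} = carrier (S_alg n)"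
    unfolding S.subalg_def by (rule S_alg_generated[symmetric])
  have "acc_ideals_above (S_alg n) (S.subalg {1..n}) {\<zero>\<^bsub>S_alg n\<^esub>}"
  proof (rule S.acc_ideals_above_subalg)
    show "ideal_in (S_alg n) (S.subalg {1..n}) {\<zero>\<^bsub>S_alg n\<^esub>}"
      unfolding carrier by (rule S.zero_ideal_in[OF S.carrier_is_subring])
  qed simp_all
  then show ?thesis
    unfolding carrier using assms(3) ideal_imp_ideal_in[OF assms(2)] ideal_in_zero[OF ideal_imp_ideal_in[OF assms(2)]]
    by (intro acc_ideals_aboveD) auto
qed

end
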